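(* Let $H$ be a connected graph and $G=L(H)$. Then $G$ is localizable if and only if one of the following holds: (1) $H$ is not isomorphic to any of $K_3$, $K_4$, the diamond, and the pendant reduction $F$ of $H$ is a connected bipartite graph with a bipartition of $V(F)$ into independent sets $U$ and $W$ such that (a) $R_{\diamond}(H)\cup R_{K_4}(H)\subseteq U$, (b) $R_{\triangle}(H)\subseteq W$, and (c) every vertex $u\in U\setminus R_{K_4}(H)$ is strong in the graph $F-(N_F(u)\cap R_{\triangle}(H))$; (2) $H$ is isomorphic to $K_3$ or to $K_4$.
   Context: $L(H)$ is the line graph of $H$. A clique is strong if it intersects every maximal independent set; a graph is localizable if its vertex set admits a partition into strong cliques. A vertex $v$ of a graph is strong if every maximal matching of that graph covers $v$. The diamond is the graph with vertices $a,b,c,d$ and edges $ab,ac,bc,bd,cd$, with tips $a,d$. Let $d_H$ denote degree in $H$. For a triangle with vertices $a,b,c$ in $H$: it is a pendant triangle if $d_H(a)=d_H(b)=2<d_H(c)$, with root $c$; a pendant diamond is a set of vertices $a,b,c,d$ of $H$ inducing a diamond with tips $a,d$ such that $d_H(a)=2$ and $d_H(b)=d_H(c)=3\le d_H(d)$, with root $d$; a pendant $K_4$ is a set of vertices $a,b,c,d$ inducing $K_4$ with $d_H(a)=d_H(b)=d_H(c)=3<d_H(d)$, with root $d$. These are the pendant subgraphs of $H$. $R_{\triangle}(H)$, $R_{\diamond}(H)$, $R_{K_4}(H)$ denote the sets of roots of all pendant triangles, pendant diamonds, and pendant $K_4$s of $H$, respectively. The pendant reduction of $H$ is the graph obtained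 from $H$ by deleting all non-root vertices of all its pendant subgraphs. $N_F(u)$ is the neighborhood of $u$ in $F$. *)

theory Defs
  imports Main "HOL-Library.Disjoint_Sets"
begin

definition graph :: "'a set \<Rightarrow> 'a set set \<Rightarrow> bool" where
  "graph V E \<longleftrightarrow> finite V \<and> (\<forall>e\<in>E. \<exists>u v. u \<noteq> v \<and> e = {u, v} \<and> u \<in> V \<and> v \<in> V)"

definition nbhd :: "'a set \<Rightarrow> 'a set set \<Rightarrow> 'a \<Rightarrow> 'a set" where
  "nbhd V E u = {v \<in> V. {u, v} \<in> E}"

definition deg :: "'a set \<Rightarrow> 'a set set \<Rightarrow> 'a \<Rightarrow> nat" where
  "deg V E u = card (nbhd V E u)"

definition connected_graph :: "'a set \<Rightarrow> 'a set set \<Rightarrow> bool" where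
  "connected_graph V E \<longleftrightarrow> V \<noteq> {} \<and>
     (\<forall>u\<in>V. \<forall>v\<in>V. (u, v) \<in> {(x, y). {x, y} \<in> E}\<^sup>*)"

definition clique :: "'a set \<Rightarrow> 'a set set \<Rightarrow> 'a set \<Rightarrow> bool" where
  "clique V E C \<longleftrightarrow> C \<subseteq> V \<and> (\<forall>u\<in>C. \<forall>v\<in>C. u \<noteq> v \<longrightarrow> {u, v} \<in> E)"

definition independent :: "'a set \<Rightarrow> 'a set set \<Rightarrow> 'a set \<Rightarrow> bool" where
  "independent V E S \<longleftrightarrow> S \<subseteq> V \<and> (\<forall>u\<in>S. \<forall>v\<in>S. {u, v} \<notin> E)"

definition maximal_independent :: "'a set \<Rightarrow> 'a set set \<Rightarrow> 'a set \<Rightarrow> bool" where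
  "maximal_independent V E S \<longleftrightarrow> independent V E S \<and>
     (\<forall>T. independent V E T \<and> S \<subseteq> T \<longrightarrow> T = S)"

definition strong_clique :: "'a set \<Rightarrow> 'a set set \<Rightarrow> 'a set \<Rightarrow> bool" where
  "strong_clique V E C \<longleftrightarrow> clique V E C \<and>
     (\<forall>S. maximal_independent V E S \<longrightarrow> C \<inter> S \<noteq> {})"

definition localizable :: "'a set \<Rightarrow> 'a set set \<Rightarrow> bool" where
  "localizable V E \<longleftrightarrow> (\<exists>P. partition_on V P \<and> (\<forall>C\<in>P. strong_clique V E C))"

definition matching :: "'a set set \<Rightarrow> 'a set set \<Rightarrow> bool" where
  "matching E M \<longleftrightarrow> M \<subseteq> E \<and> (\<forall>e\<in>M. \<forall>f\<in>M. e \<noteq> f \<longrightarrow> e \<inter> f = {})"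

definition maximal_matching :: "'a set set \<Rightarrow> 'a set set \<Rightarrow> bool" where
  "maximal_matching E M \<longleftrightarrow> matching E M \<and> (\<forall>M'. matching E M' \<and> M \<subseteq> M' \<longrightarrow> M' = M)"

definition strong_vertex :: "'a set \<Rightarrow> 'a set set \<Rightarrow> 'a \<Rightarrow> bool" where
  "strong_vertex V E v \<longleftrightarrow> v \<in> V \<and> (\<forall>M. maximal_matching E M \<longrightarrow> v \<in> \<Union>M)"

definition line_edges :: "'a set set \<Rightarrow> 'a set set set" where
  "line_edges E = {{e, f} | e f. e \<in> E \<and> f \<in> E \<and> e \<noteq> f \<and> e \<inter> f \<noteq> {}}"

definition del_V :: "'a set \<Rightarrow> 'a set \<Rightarrow> 'a set" where
  "del_V V X = V - X"

definition del_E :: "'a set set \<Rightarrow> 'a set \<Rightarrow> 'a set set" where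
  "del_E E X = {e \<in> E. e \<inter> X = {}}"

definition bipartition :: "'a set \<Rightarrow> 'a set set \<Rightarrow> 'a set \<Rightarrow> 'a set \<Rightarrow> bool" where
  "bipartition V E U W \<longleftrightarrow> U \<inter> W = {} \<and> U \<union> W = V \<and> independent V E U \<and> independent V E W"

definition isomorphic :: "'a set \<Rightarrow> 'a set set \<Rightarrow> 'b set \<Rightarrow> 'b set set \<Rightarrow> bool" where
  "isomorphic V E V' E' \<longleftrightarrow> (\<exists>f. bij_betw f V V' \<and>
     (\<forall>u\<in>V. \<forall>v\<in>V. {u, v} \<in> E \<longleftrightarrow> {f u, f v} \<in> E'))"

definition K_V :: "nat \<Rightarrow> nat set" where
  "K_V n = {0..<n}"

definition K_E :: "nat \<Rightarrow> nat set set" where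
  "K_E n = {{i, j} | i j. i < n \<and> j < n \<and> i \<noteq> j}"

text \<open>Diamond on a=0, b=1, c=2, d=3 with edges ab, ac, bc, bd, cd.\<close>
definition diamond_V :: "nat set" where
  "diamond_V = {0, 1, 2, 3}"

definition diamond_E :: "nat set set" where
  "diamond_E = {{0, 1}, {0, 2}, {1, 2}, {1, 3}, {2, 3}}"

definition pendant_triangle :: "'a set \<Rightarrow> 'a set set \<Rightarrow> 'a \<Rightarrow> 'a \<Rightarrow> 'a \<Rightarrow> bool" where
  "pendant_triangle V E a b c \<longleftrightarrow> a \<in> V \<and> b \<in> V \<and> c \<in> V \<and> a \<noteq> b \<and> a \<noteq> c \<and> b \<noteq> c \<and>
     {a, b} \<in> E \<and> {a, c} \<in> E \<and> {b, c} \<in> E \<and>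
     deg V E a = 2 \<and> deg V E b = 2 \<and> 2 < deg V E c"

definition pendant_diamond :: "'a set \<Rightarrow> 'a set set \<Rightarrow> 'a \<Rightarrow> 'a \<Rightarrow> 'a \<Rightarrow> 'a \<Rightarrow> bool" where
  "pendant_diamond V E a b c d \<longleftrightarrow> a \<in> V \<and> b \<in> V \<and> c \<in> V \<and> d \<in> V \<and>
     distinct [a, b, c, d] \<and>
     {a, b} \<in> E \<and> {a, c} \<in> E \<and> {b, c} \<in> E \<and> {b, d} \<in> E \<and> {c, d} \<in> E \<and> {a, d} \<notin> E \<and>
     deg V E a = 2 \<and> deg V E b = 3 \<and> deg V E c = 3 \<and> 3 \<le> deg V E d"

definition pendant_K4 :: "'a set \<Rightarrow> 'a set set \<Rightarrow> 'a \<Rightarrow> 'a \<Rightarrow> 'a \<Rightarrow> 'a \<Rightarrow> bool" where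
  "pendant_K4 V E a b c d \<longleftrightarrow> a \<in> V \<and> b \<in> V \<and> c \<in> V \<and> d \<in> V \<and>
     distinct [a, b, c, d] \<and>
     {a, b} \<in> E \<and> {a, c} \<in> E \<and> {a, d} \<in> E \<and> {b, c} \<in> E \<and> {b, d} \<in> E \<and> {c, d} \<in> E \<and>
     deg V E a = 3 \<and> deg V E b = 3 \<and> deg V E c = 3 \<and> 3 < deg V E d"

definition R_tri :: "'a set \<Rightarrow> 'a set set \<Rightarrow> 'a set" where
  "R_tri V E = {c. \<exists>a b. pendant_triangle V E a b c}"

definition R_dia :: "'a set \<Rightarrow> 'a set set \<Rightarrow> 'a set" where
  "R_dia V E = {d. \<exists>a b c. pendant_diamond V E a b c d}"

definition R_K4 :: "'a set \<Rightarrow> 'a set set \<Rightarrow> 'a set" where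
  "R_K4 V E = {d. \<exists>a b c. pendant_K4 V E a b c d}"

definition pendant_nonroots :: "'a set \<Rightarrow> 'a set set \<Rightarrow> 'a set" where
  "pendant_nonroots V E =
     {x. \<exists>a b c. pendant_triangle V E a b c \<and> x \<in> {a, b}} \<union>
     {x. \<exists>a b c d. pendant_diamond V E a b c d \<and> x \<in> {a, b, c}} \<union>
     {x. \<exists>a b c d. pendant_K4 V E a b c d \<and> x \<in> {a, b, c}}"

definition pr_V :: "'a set \<Rightarrow> 'a set set \<Rightarrow> 'a set" where
  "pr_V V E = del_V V (pendant_nonroots V E)"

definition pr_E :: "'a set \<Rightarrow> 'a set set \<Rightarrow> 'a set set" where
  "pr_E V E = del_E E (pendant_nonroots V E)"

end

theory Submission
  imports Defs
begin

text \<open>Independent sets of L(H) are the matchings of H and its cliques are stars and triangles,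
  so L(H) is localizable iff E(H) splits into stars at strong vertices and triangles met by every
  maximal matching. Such a triangle always contains a non-root vertex of a pendant subgraph, unless
  H is K3, K4 or the diamond (which is not localizable): a maximal matching through two disjoint
  outer edges would miss it, so the outer neighbourhood of the triangle is one vertex at most.
  Hence the star parts whose centre lies in the pendant reduction F give a bipartition U, W of F,
  and conversely the stars at U together with the triangles of the pendant subgraphs localize
  L(H). Finally, u is strong in H iff it is strong in F minus its neighbouring triangle roots,
  because every such root can be matched into its pendant triangle.\<close>

lemma eq_doubleton_if_card_2:
  assumes "finite A" "{x,y} \<subseteq> A" "x \<noteq> y" "card A = 2"
  shows "A = {x,y}"
  using card_subset_eq[OF assms(1,2)] assms(3,4) by simp

lemma eq_triple_if_card_3:
  assumes "finite A" "{x,y,z} \<subseteq> A" "distinct [x,y,z]" "card A = 3"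
  shows "A = {x,y,z}"
  using card_subset_eq[OF assms(1,2)] assms(3,4) by simp

lemma card_le_2_if_subset: "A \<subseteq> {x,y} \<Longrightarrow> card A \<le> 2"
proof -
  assume "A \<subseteq> {x,y}"
  then have "card A \<le> card {x,y}" by (simp add: card_mono)
  moreover have "card {x,y} \<le> 2" by (cases "x = y") auto
  ultimately show ?thesis by linarith
qed

lemma card_le_3_if_subset: "A \<subseteq> {x,y,z} \<Longrightarrow> card A \<le> 3"
proof -
  assume "A \<subseteq> {x,y,z}"
  then have "card A \<le> card {x,y,z}" by (simp add: card_mono)
  moreover have "card {x,y,z} \<le> 3" by (simp add: card_insert_le_m1)
  ultimately show ?thesis by linarith
qed

lemma card_ge_3_if_subset: "finite A \<Longrightarrow> {p,q,r} \<subseteq> A \<Longrightarrow> distinct [p,q,r] \<Longrightarrow> 3 \<le> card A"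
  using card_mono[of A "{p,q,r}"] by simp

lemma card_ge_4_if_subset: "finite A \<Longrightarrow> {p,q,r,t} \<subseteq> A \<Longrightarrow> distinct [p,q,r,t] \<Longrightarrow> 4 \<le> card A"
  using card_mono[of A "{p,q,r,t}"] by simp

lemma card_4_iff: "card S = 4 \<longleftrightarrow> (\<exists>x y z w. S = {x,y,z,w} \<and> distinct [x,y,z,w])"
proof
  assume "card S = 4"
  then obtain b B where S: "S = insert b B" "b \<notin> B" "card B = 3"
    using card_Suc_eq[of S 3] by auto
  then obtain x y z where "B = {x,y,z}" "distinct [x,y,z]" unfolding card_3_iff by auto
  then show "\<exists>x y z w. S = {x,y,z,w} \<and> distinct [x,y,z,w]" using S by auto
qed auto

section \<open>Matchings and the line graph\<close>

definition isolating_matching :: "'a set set \<Rightarrow> 'a set set \<Rightarrow> 'a \<Rightarrow> bool" where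
  "isolating_matching E M u \<longleftrightarrow> matching E M \<and> u \<notin> \<Union>M \<and> (\<forall>v. {u,v} \<in> E \<longrightarrow> v \<in> \<Union>M)"

lemma matching_Un:
  assumes "matching E M1" "matching E M2" "\<Union>M1 \<inter> \<Union>M2 = {}"
  shows "matching E (M1 \<union> M2)"
  unfolding matching_def
proof (intro conjI ballI impI)
  show "M1 \<union> M2 \<subseteq> E" using assms(1,2) unfolding matching_def by blast
next
  fix e f assume "e \<in> M1 \<union> M2" "f \<in> M1 \<union> M2" "e \<noteq> f"
  moreover have "e \<inter> f = {}" if "e \<in> M1" "f \<in> M2" for e f
    using that assms(3) by blast
  ultimately show "e \<inter> f = {}"
    using assms(1,2) unfolding matching_def by (metis Int_commute Un_iff)
qed

lemma line_edges_iff: "{e,f} \<in> line_edges E \<longleftrightarrow> e \<in> E \<and> f \<in> E \<and> e \<noteq> f \<and> e \<inter> f \<noteq> {}"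
  unfolding line_edges_def by (auto simp: doubleton_eq_iff)

lemma independent_line_graph_iff: "independent E (line_edges E) S \<longleftrightarrow> matching E S"
  unfolding independent_def matching_def line_edges_iff by blast

lemma maximal_independent_line_graph_iff:
  "maximal_independent E (line_edges E) S \<longleftrightarrow> maximal_matching E S"
  unfolding maximal_independent_def maximal_matching_def independent_line_graph_iff by blast

lemma strong_clique_line_graph_iff: "strong_clique E (line_edges E) C \<longleftrightarrow>
   C \<subseteq> E \<and> (\<forall>e\<in>C. \<forall>f\<in>C. e \<noteq> f \<longrightarrow> e \<inter> f \<noteq> {}) \<and> (\<forall>M. maximal_matching E M \<longrightarrow> C \<inter> M \<noteq> {})"
  unfolding strong_clique_def clique_def maximal_independent_line_graph_iff line_edges_iff by blast

definition localizing_partition :: "'a set set \<Rightarrow> 'a set set set \<Rightarrow> bool" where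
  "localizing_partition E P \<longleftrightarrow> partition_on E P \<and> (\<forall>C\<in>P. strong_clique E (line_edges E) C)"

lemma localizable_line_graph_iff: "localizable E (line_edges E) \<longleftrightarrow> (\<exists>P. localizing_partition E P)"
  unfolding localizable_def localizing_partition_def by blast

lemma localizing_partition_unique:
  assumes "localizing_partition E P" "C1 \<in> P" "C2 \<in> P" "e \<in> C1" "e \<in> C2"
  shows "C1 = C2"
  using assms disjointD[of P C1 C2] unfolding localizing_partition_def partition_on_def by blast

lemma localizing_partition_cover:
  assumes "localizing_partition E P" "e \<in> E"
  obtains C where "C \<in> P" "e \<in> C"
  using assms unfolding localizing_partition_def partition_on_def by blast

lemma K_E_iff: "{i,j} \<in> K_E n \<longleftrightarrow> i < n \<and> j < n \<and> i \<noteq> j"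
  unfolding K_E_def by (auto simp: doubleton_eq_iff)

definition tri :: "'a \<Rightarrow> 'a \<Rightarrow> 'a \<Rightarrow> 'a set set" where
  "tri a b c = {{a,b},{a,c},{b,c}}"

lemma tri_commute: "tri a b c = tri b a c" "tri a b c = tri a c b"
  unfolding tri_def by (simp_all add: insert_commute)

lemma doubleton_in_tri:
  assumes "p \<in> {a,b,c}" "q \<in> {a,b,c}" "p \<noteq> q"
  shows "{p,q} \<in> tri a b c"
proof -
  have "p = a \<or> p = b \<or> p = c" "q = a \<or> q = b \<or> q = c" using assms by auto
  then show ?thesis using assms(3) unfolding tri_def by (elim disjE) (simp_all add: insert_commute)
qed

lemma tri_through_edge:
  assumes "{p,q} \<in> tri x y z" "x \<noteq> y" "x \<noteq> z" "y \<noteq> z" "p \<noteq> q"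
  obtains t where "tri x y z = tri p q t" "t \<noteq> p" "t \<noteq> q"
proof -
  have "{p,q} = {x,y} \<or> {p,q} = {x,z} \<or> {p,q} = {y,z}" using assms(1) unfolding tri_def by simp
  then have "(p = x \<and> q = y) \<or> (p = y \<and> q = x) \<or> (p = x \<and> q = z) \<or> (p = z \<and> q = x) \<or>
     (p = y \<and> q = z) \<or> (p = z \<and> q = y)" by (auto simp: doubleton_eq_iff)
  then show ?thesis
  proof (elim disjE conjE)
    assume "p = x" "q = y" then show ?thesis using that assms(2-4) by blast
  next
    assume "p = y" "q = x" then show ?thesis using that[of z] assms(2-4) tri_commute by metis
  next
    assume "p = x" "q = z" then show ?thesis using that[of y] assms(2-4) tri_commute by metis
  next
    assume "p = z" "q = x" then show ?thesis using that[of y] assms(2-4) tri_commute by metis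
  next
    assume "p = y" "q = z" then show ?thesis using that[of x] assms(2-4) tri_commute by metis
  next
    assume "p = z" "q = y" then show ?thesis using that[of x] assms(2-4) tri_commute by metis
  qed
qed

definition reduction_strong :: "'a set \<Rightarrow> 'a set set \<Rightarrow> 'a \<Rightarrow> bool" where
  "reduction_strong V E u \<longleftrightarrow>
     strong_vertex (del_V (pr_V V E) (nbhd (pr_V V E) (pr_E V E) u \<inter> R_tri V E))
       (del_E (pr_E V E) (nbhd (pr_V V E) (pr_E V E) u \<inter> R_tri V E)) u"

definition admissible_bipartition :: "'a set \<Rightarrow> 'a set set \<Rightarrow> 'a set \<Rightarrow> 'a set \<Rightarrow> bool" where
  "admissible_bipartition V E U W \<longleftrightarrow> bipartition (pr_V V E) (pr_E V E) U W \<and>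
     R_dia V E \<union> R_K4 V E \<subseteq> U \<and> R_tri V E \<subseteq> W \<and> (\<forall>u \<in> U - R_K4 V E. reduction_strong V E u)"

definition complete_graph :: "'a set \<Rightarrow> 'a set set \<Rightarrow> bool" where
  "complete_graph V E \<longleftrightarrow> (\<forall>u\<in>V. \<forall>v\<in>V. u \<noteq> v \<longrightarrow> {u,v} \<in> E)"

locale simple_graph =
  fixes V :: "'a set" and E :: "'a set set"
  assumes graph: "graph V E"
begin

abbreviation "N \<equiv> nbhd V E"

lemma finite_V: "finite V"
  using graph by (simp add: graph_def)

lemma edgeE:
  assumes "e \<in> E"
  obtains u v where "u \<noteq> v" "e = {u,v}" "u \<in> V" "v \<in> V"
  using graph assms unfolding graph_def by blast

lemma edge_subset: "e \<in> E \<Longrightarrow> e \<subseteq> V"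
  by (auto elim: edgeE)

lemma finite_E: "finite E"
  using finite_V edge_subset by (meson Pow_iff finite_Pow_iff finite_subset subsetI)

lemma edge_not_loop: "{u,v} \<in> E \<Longrightarrow> u \<noteq> v"
  by (metis doubleton_eq_iff edgeE)

lemma edge_vertices: "{u,v} \<in> E \<Longrightarrow> u \<in> V \<and> v \<in> V"
  using edge_subset by blast

lemma edge_other_end:
  assumes "e \<in> E" "x \<in> e"
  obtains y where "y \<noteq> x" "e = {x,y}"
proof -
  obtain u v where uv: "u \<noteq> v" "e = {u,v}" using assms(1) by (blast elim: edgeE)
  show ?thesis
  proof (cases "x = u")
    case True then show ?thesis using that[of v] uv by blast
  next
    case False then have "x = v" using assms(2) uv by blast
    then show ?thesis using that[of u] uv by (simp add: insert_commute)
  qed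
qed

lemma nbhd_iff: "v \<in> N u \<longleftrightarrow> {u,v} \<in> E"
  unfolding nbhd_def using edge_vertices by blast

lemma finite_nbhd: "finite (N u)"
  unfolding nbhd_def using finite_V by simp

lemma not_in_own_nbhd: "v \<notin> N v"
  using edge_not_loop nbhd_iff by blast

lemma deg_eq_card: "deg V E u = card (N u)"
  by (simp add: deg_def)

lemma subgraph_del: "simple_graph (del_V V X) (del_E E X)"
  unfolding simple_graph_def graph_def del_V_def del_E_def using finite_V
  by (auto elim!: edgeE)

lemma maximal_matching_exists:
  assumes "matching E M"
  obtains M' where "maximal_matching E M'" "M \<subseteq> M'"
proof -
  let ?A = "{M'. matching E M' \<and> M \<subseteq> M'}"
  have "?A \<subseteq> Pow E" by (auto simp: matching_def)
  then have "finite ?A" using finite_E by (meson finite_Pow_iff finite_subset)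
  then obtain m where m: "m \<in> ?A" "\<forall>b\<in>?A. m \<le> b \<longrightarrow> m = b"
    using finite_has_maximal2[of ?A M] assms by auto
  then have "maximal_matching E m"
    unfolding maximal_matching_def using subset_trans[of M m] by blast
  with m show ?thesis using that by blast
qed

lemma maximal_matchingD:
  assumes "maximal_matching E M"
  shows "M \<subseteq> E" "e \<in> M \<Longrightarrow> f \<in> M \<Longrightarrow> e \<noteq> f \<Longrightarrow> e \<inter> f = {}"
  using assms unfolding maximal_matching_def matching_def by blast+

lemma maximal_matching_covers_nbhd:
  assumes "maximal_matching E M" "u \<notin> \<Union>M" "{u,v} \<in> E"
  shows "v \<in> \<Union>M"
proof (rule ccontr)
  assume "v \<notin> \<Union>M"
  then have "matching E (insert {u,v} M)"
    using assms edge_not_loop unfolding maximal_matching_def matching_def by blast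
  moreover have "{u,v} \<notin> M" using assms(2) by auto
  ultimately show False using assms(1) unfolding maximal_matching_def by blast
qed

lemma matching_partner:
  assumes "M \<subseteq> E" "x \<in> \<Union>M"
  obtains y where "{x,y} \<in> M" "y \<in> N x"
proof -
  obtain e where e: "e \<in> M" "x \<in> e" using assms(2) by blast
  then obtain y where "e = {x,y}" using assms(1) by (auto elim: edge_other_end)
  with e assms(1) show ?thesis using that by (auto simp: nbhd_iff)
qed

lemma matching_partner_unique:
  assumes "matching E M" "{x,y} \<in> M" "{x,z} \<in> M"
  shows "y = z"
  using assms unfolding matching_def by (metis doubleton_eq_iff insert_disjoint(1) insertI1)

lemma strong_vertex_iff: "strong_vertex V E u \<longleftrightarrow> u \<in> V \<and> (\<nexists>M. isolating_matching E M u)"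
proof -
  have "(\<exists>M. maximal_matching E M \<and> u \<notin> \<Union>M) \<longleftrightarrow> (\<exists>M. isolating_matching E M u)"
  proof
    assume "\<exists>M. maximal_matching E M \<and> u \<notin> \<Union>M"
    then show "\<exists>M. isolating_matching E M u"
      unfolding isolating_matching_def maximal_matching_def
      using maximal_matching_covers_nbhd by (metis maximal_matching_def)
  next
    assume "\<exists>M. isolating_matching E M u"
    then obtain M where M: "matching E M" "u \<notin> \<Union>M" "\<forall>v. {u,v} \<in> E \<longrightarrow> v \<in> \<Union>M"
      unfolding isolating_matching_def by blast
    obtain M' where M': "maximal_matching E M'" "M \<subseteq> M'" using maximal_matching_exists M(1) .
    have "u \<notin> \<Union>M'"
    proof
      assume "u \<in> \<Union>M'"
      then obtain v where v: "{u,v} \<in> M'" using maximal_matchingD(1)[OF M'(1)]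
        by (auto elim: matching_partner)
      then have "v \<in> \<Union>M" using M(3) maximal_matchingD(1)[OF M'(1)] by blast
      then obtain f where f: "f \<in> M" "v \<in> f" by blast
      then have "u \<notin> f" "f \<in> M'" using M(2) M'(2) by auto
      then show False using maximal_matchingD(2)[OF M'(1) v] f(2) by blast
    qed
    then show "\<exists>M. maximal_matching E M \<and> u \<notin> \<Union>M" using M' by blast
  qed
  then show ?thesis unfolding strong_vertex_def by blast
qed

lemma not_strong_vertexI:
  assumes "matching E M" "u \<notin> \<Union>M" "N u \<subseteq> \<Union>M"
  shows "\<not> strong_vertex V E u"
proof -
  have "\<forall>v. {u,v} \<in> E \<longrightarrow> v \<in> \<Union>M" using assms(3) nbhd_iff by blast
  then show ?thesis using assms(1,2) unfolding strong_vertex_iff isolating_matching_def by blast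
qed

end

section \<open>Pendant subgraphs\<close>

context simple_graph
begin

abbreviation "NR \<equiv> pendant_nonroots V E"
abbreviation "pt \<equiv> pendant_triangle V E"
abbreviation "pd \<equiv> pendant_diamond V E"
abbreviation "pk \<equiv> pendant_K4 V E"

lemma pendant_triangleD:
  assumes "pt a b c"
  shows "2 < card (N c)" "a \<noteq> b" "a \<noteq> c" "b \<noteq> c" "{a,b} \<in> E" "{a,c} \<in> E" "{b,c} \<in> E"
    "a \<in> V" "b \<in> V" "c \<in> V"
  using assms by (auto simp: pendant_triangle_def deg_eq_card)

lemma pendant_diamondD:
  assumes "pd a b c d"
  shows "3 \<le> card (N d)" "distinct [a,b,c,d]" "{a,b} \<in> E" "{a,c} \<in> E" "{b,c} \<in> E"
    "{b,d} \<in> E" "{c,d} \<in> E" "{a,d} \<notin> E" "d \<in> V"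
  using assms by (auto simp: pendant_diamond_def deg_eq_card)

lemma pendant_K4D:
  assumes "pk a b c d"
  shows "3 < card (N d)" "distinct [a,b,c,d]" "{a,b} \<in> E" "{a,c} \<in> E" "{b,c} \<in> E"
    "{b,d} \<in> E" "{c,d} \<in> E" "{a,d} \<in> E" "d \<in> V"
  using assms by (auto simp: pendant_K4_def deg_eq_card)

lemma pendant_triangle_nbhd:
  assumes "pt a b c"
  shows "N a = {b,c}" "N b = {a,c}"
proof -
  from assms have h: "{a,b} \<in> E" "{a,c} \<in> E" "{b,c} \<in> E" "b \<noteq> c" "a \<noteq> c"
    "card (N a) = 2" "card (N b) = 2" by (auto simp: pendant_triangle_def deg_eq_card)
  show "N a = {b,c}" using eq_doubleton_if_card_2[OF finite_nbhd[of a], of b c] h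
    by (simp add: nbhd_iff)
  show "N b = {a,c}" using eq_doubleton_if_card_2[OF finite_nbhd[of b], of a c] h
    by (simp add: nbhd_iff insert_commute)
qed

lemma pendant_diamond_nbhd:
  assumes "pd a b c d"
  shows "N a = {b,c}" "N b = {a,c,d}" "N c = {a,b,d}"
proof -
  from assms have h: "{a,b} \<in> E" "{a,c} \<in> E" "{b,c} \<in> E" "{b,d} \<in> E" "{c,d} \<in> E"
    "distinct [a,b,c,d]" "card (N a) = 2" "card (N b) = 3" "card (N c) = 3"
    by (auto simp: pendant_diamond_def deg_eq_card)
  show "N a = {b,c}" using eq_doubleton_if_card_2[OF finite_nbhd[of a], of b c] h
    by (simp add: nbhd_iff)
  show "N b = {a,c,d}" using eq_triple_if_card_3[OF finite_nbhd[of b], of a c d] h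
    by (simp add: nbhd_iff insert_commute)
  show "N c = {a,b,d}" using eq_triple_if_card_3[OF finite_nbhd[of c], of a b d] h
    by (simp add: nbhd_iff insert_commute)
qed

lemma pendant_K4_nbhd:
  assumes "pk a b c d"
  shows "N a = {b,c,d}" "N b = {a,c,d}" "N c = {a,b,d}"
proof -
  from assms have h: "{a,b} \<in> E" "{a,c} \<in> E" "{a,d} \<in> E" "{b,c} \<in> E" "{b,d} \<in> E"
    "{c,d} \<in> E" "distinct [a,b,c,d]" "card (N a) = 3" "card (N b) = 3" "card (N c) = 3"
    by (auto simp: pendant_K4_def deg_eq_card)
  show "N a = {b,c,d}" using eq_triple_if_card_3[OF finite_nbhd[of a], of b c d] h
    by (simp add: nbhd_iff)
  show "N b = {a,c,d}" using eq_triple_if_card_3[OF finite_nbhd[of b], of a c d] h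
    by (simp add: nbhd_iff insert_commute)
  show "N c = {a,b,d}" using eq_triple_if_card_3[OF finite_nbhd[of c], of a b d] h
    by (simp add: nbhd_iff insert_commute)
qed

lemma nonroot_iff: "z \<in> NR \<longleftrightarrow> (\<exists>a b c. pt a b c \<and> z \<in> {a,b}) \<or>
    (\<exists>a b c d. pd a b c d \<and> z \<in> {a,b,c}) \<or> (\<exists>a b c d. pk a b c d \<and> z \<in> {a,b,c})"
  unfolding pendant_nonroots_def by blast

lemma pendant_nonrootsI:
  "pt a b c \<Longrightarrow> a \<in> NR \<and> b \<in> NR"
  "pd a b c d \<Longrightarrow> a \<in> NR \<and> b \<in> NR \<and> c \<in> NR"
  "pk a b c d \<Longrightarrow> a \<in> NR \<and> b \<in> NR \<and> c \<in> NR"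
  unfolding pendant_nonroots_def by blast+

lemma pendant_triangle_root_notin_nonroots:
  assumes "pt a b c"
  shows "c \<notin> NR"
proof
  assume "c \<in> NR"
  have dg: "deg V E a = 2" "deg V E b = 2" "deg V E c > 2" "a \<noteq> b"
    using assms by (auto simp: pendant_triangle_def)
  have ab: "a \<in> N c" "b \<in> N c"
    using assms by (auto simp: pendant_triangle_def insert_commute nbhd_iff)
  from \<open>c \<in> NR\<close> consider (t) a' b' c' where "pt a' b' c'" "c \<in> {a',b'}"
    | (d) a' b' c' d' where "pd a' b' c' d'" "c \<in> {a',b',c'}"
    | (k) a' b' c' d' where "pk a' b' c' d'" "c \<in> {a',b',c'}" unfolding nonroot_iff by blast
  then show False
  proof cases
    case t then show ?thesis using dg by (auto simp: pendant_triangle_def)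
  next
    case d
    have "deg V E a' = 2" "deg V E b' = 3" "deg V E c' = 3" "deg V E d' \<ge> 3"
      using d(1) by (auto simp: pendant_diamond_def)
    then show ?thesis using d(2) pendant_diamond_nbhd[OF d(1)] ab dg by auto
  next
    case k
    have "deg V E a' = 3" "deg V E b' = 3" "deg V E c' = 3" "deg V E d' > 3"
      using k(1) by (auto simp: pendant_K4_def)
    then show ?thesis using k(2) pendant_K4_nbhd[OF k(1)] ab dg by auto
  qed
qed

lemma pendant_diamond_root_notin_nonroots:
  assumes "pd a b c d"
  shows "d \<notin> NR"
proof
  assume "d \<in> NR"
  have dg: "deg V E a = 2" "deg V E b = 3" "deg V E c = 3" "deg V E d \<ge> 3" "distinct [a,b,c,d]"
    "{a,d} \<notin> E" using assms by (auto simp: pendant_diamond_def)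
  have bc: "b \<in> N d" "c \<in> N d"
    using assms by (auto simp: pendant_diamond_def insert_commute nbhd_iff)
  note Nabc = pendant_diamond_nbhd[OF assms]
  from \<open>d \<in> NR\<close> consider (t) a' b' c' where "pt a' b' c'" "d \<in> {a',b'}"
    | (d) a' b' c' d' where "pd a' b' c' d'" "d \<in> {a',b',c'}"
    | (k) a' b' c' d' where "pk a' b' c' d'" "d \<in> {a',b',c'}" unfolding nonroot_iff by blast
  then show False
  proof cases
    case t then show ?thesis using dg by (auto simp: pendant_triangle_def)
  next
    case d
    note N' = pendant_diamond_nbhd[OF d(1)]
    have dd: "deg V E a' = 2" "deg V E b' = 3" "deg V E c' = 3" "distinct [a',b',c',d']"
      using d(1) by (auto simp: pendant_diamond_def)
    \<comment> \<open>d is a degree-3 vertex b' or c' of the second diamond, whose tip a' is then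
      forced to be a, which is not adjacent to d.\<close>
    have "d = b' \<or> d = c'" using d(2) dd dg by auto
    then show ?thesis
    proof
      assume e: "d = b'"
      then have "b \<in> {a',c',d'}" "c \<in> {a',c',d'}" using N' bc by auto
      then have "b \<in> {c',d'}" "c \<in> {c',d'}" using dd dg by auto
      then have "c' \<in> {b,c}" using dg by auto
      then have "a' \<in> N b \<union> N c" using N' by auto
      then have "a' = a" using Nabc dd dg e by auto
      moreover have "a' \<in> N d" using N' e by auto
      ultimately show False using dg(6) by (simp add: nbhd_iff insert_commute)
    next
      assume e: "d = c'"
      then have "b \<in> {a',b',d'}" "c \<in> {a',b',d'}" using N' bc by auto
      then have "b \<in> {b',d'}" "c \<in> {b',d'}" using dd dg by auto
      then have "b' \<in> {b,c}" using dg by auto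
      then have "a' \<in> N b \<union> N c" using N' by (auto simp: insert_commute)
      then have "a' = a" using Nabc dd dg e by auto
      moreover have "a' \<in> N d" using N' e by auto
      ultimately show False using dg(6) by (simp add: nbhd_iff insert_commute)
    qed
  next
    case k
    have E6: "{a',b'} \<in> E" "{a',c'} \<in> E" "{b',c'} \<in> E" "{a',d'} \<in> E" "{b',d'} \<in> E" "{c',d'} \<in> E"
      using k(1) by (auto simp: pendant_K4_def)
    have sub: "N d \<subseteq> {a',b',c',d'}" using k(2) pendant_K4_nbhd[OF k(1)] by auto
    have "N d \<subseteq> {b,c}"
    proof
      fix y assume y: "y \<in> N d"
      show "y \<in> {b,c}"
      proof (rule ccontr)
        assume ny: "y \<notin> {b,c}"
        have "y \<in> {a',b',c',d'}" "b \<in> {a',b',c',d'}" using sub y bc by auto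
        then have "y \<in> N b" using E6 ny by (auto simp: nbhd_iff insert_commute)
        moreover have "y \<noteq> d" using y not_in_own_nbhd by blast
        ultimately have "y = a" using Nabc ny by auto
        then show False using y dg(6) by (simp add: nbhd_iff insert_commute)
      qed
    qed
    then have "card (N d) \<le> 2" by (rule card_le_2_if_subset)
    then show False using dg(4) by (simp add: deg_eq_card)
  qed
qed

lemma pendant_K4_root_notin_nonroots:
  assumes "pk a b c d"
  shows "d \<notin> NR"
proof
  assume "d \<in> NR"
  moreover have "deg V E d > 3" using assms by (auto simp: pendant_K4_def)
  ultimately show False unfolding nonroot_iff
    by (auto simp: pendant_triangle_def pendant_diamond_def pendant_K4_def)
qed

definition pendant_attached :: "'a \<Rightarrow> 'a \<Rightarrow> bool" where
  "pendant_attached x r \<longleftrightarrow> (\<exists>a b. pt a b r \<and> x \<in> {a,b}) \<or> (\<exists>a b c. pd a b c r \<and> x \<in> {a,b,c}) \<or>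
     (\<exists>a b c. pk a b c r \<and> x \<in> {a,b,c})"

lemma pendant_attached_nonroot: "pendant_attached x r \<Longrightarrow> x \<in> NR"
  unfolding pendant_attached_def nonroot_iff by blast

lemma nonroot_pendant_attached: "x \<in> NR \<Longrightarrow> \<exists>r. pendant_attached x r"
  unfolding pendant_attached_def nonroot_iff by blast

lemma pendant_attached_root: "pendant_attached x r \<Longrightarrow> r \<notin> NR \<and> r \<in> V"
  unfolding pendant_attached_def
  using pendant_triangle_root_notin_nonroots pendant_diamond_root_notin_nonroots
    pendant_K4_root_notin_nonroots
  by (auto simp: pendant_triangle_def pendant_diamond_def pendant_K4_def)

lemma pendant_attached_roots:
  "pendant_attached x r \<Longrightarrow> r \<in> R_tri V E \<or> r \<in> R_dia V E \<or> r \<in> R_K4 V E"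
  unfolding pendant_attached_def R_tri_def R_dia_def R_K4_def by blast

lemma pendant_attached_step:
  assumes "pendant_attached x r" "{x,z} \<in> E"
  shows "z = r \<or> pendant_attached z r"
proof -
  have z: "z \<in> N x" using assms(2) by (simp add: nbhd_iff)
  from assms(1) consider (t) a b where "pt a b r" "x \<in> {a,b}"
    | (d) a b c where "pd a b c r" "x \<in> {a,b,c}"
    | (k) a b c where "pk a b c r" "x \<in> {a,b,c}" unfolding pendant_attached_def by blast
  then show ?thesis
  proof cases
    case t
    then have "z \<in> {a,b,r}" using pendant_triangle_nbhd[OF t(1)] z by auto
    then show ?thesis using t(1) unfolding pendant_attached_def by blast
  next
    case d
    then have "z \<in> {a,b,c,r}" using pendant_diamond_nbhd[OF d(1)] z by auto
    then show ?thesis using d(1) unfolding pendant_attached_def by blast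
  next
    case k
    then have "z \<in> {a,b,c,r}" using pendant_K4_nbhd[OF k(1)] z by auto
    then show ?thesis using k(1) unfolding pendant_attached_def by blast
  qed
qed

lemma nonroot_nbhd_attached:
  assumes "x \<in> NR" "{x,z} \<in> E" "z \<notin> NR"
  shows "pendant_attached x z"
proof -
  obtain r where r: "pendant_attached x r" using nonroot_pendant_attached assms(1) by blast
  then have "z = r \<or> pendant_attached z r" using pendant_attached_step assms(2) by blast
  then show ?thesis using r assms(3) pendant_attached_nonroot by blast
qed

abbreviation "FV \<equiv> pr_V V E"
abbreviation "FE \<equiv> pr_E V E"
abbreviation "NF \<equiv> nbhd FV FE"

lemma pr_E_iff: "e \<in> FE \<longleftrightarrow> e \<in> E \<and> e \<inter> NR = {}"
  by (simp add: pr_E_def del_E_def)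

lemma pr_V_iff: "v \<in> FV \<longleftrightarrow> v \<in> V \<and> v \<notin> NR"
  by (simp add: pr_V_def del_V_def)

lemma nbhd_pr_iff: "v \<in> NF u \<longleftrightarrow> {u,v} \<in> FE"
  unfolding nbhd_def pr_E_iff pr_V_iff using edge_vertices by blast

lemma del_pr_E_iff: "e \<in> del_E FE X \<longleftrightarrow> e \<in> E \<and> e \<inter> NR = {} \<and> e \<inter> X = {}"
  by (auto simp: del_E_def pr_E_iff)

lemma simple_graph_pr: "simple_graph FV FE"
  unfolding pr_V_def pr_E_def by (rule subgraph_del)

lemma pr_reachable:
  assumes "u \<in> V" "u \<notin> NR" "(u,x) \<in> {(x,y). {x,y} \<in> E}\<^sup>*"
  shows "\<exists>y. (u,y) \<in> {(x,y). {x,y} \<in> FE}\<^sup>* \<and> y \<notin> NR \<and> (x = y \<or> pendant_attached x y)"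
  using assms(3)
proof (induction rule: rtrancl_induct)
  case base then show ?case using assms by blast
next
  case (step x x')
  then obtain y where y: "(u,y) \<in> {(x,y). {x,y} \<in> FE}\<^sup>*" "y \<notin> NR"
    "x = y \<or> pendant_attached x y" by blast
  have e: "{x,x'} \<in> E" using step(2) by simp
  show ?case
  proof (cases "x = y")
    case xy: True
    show ?thesis
    proof (cases "x' \<in> NR")
      case True
      then have "pendant_attached x' x"
        using nonroot_nbhd_attached[of x' x] e y(2) xy by (simp add: insert_commute)
      then show ?thesis using y xy by blast
    next
      case False
      have "{x,x'} \<in> FE" using e False y(2) xy by (auto simp: pr_E_iff)
      then have "(u,x') \<in> {(x,y). {x,y} \<in> FE}\<^sup>*" using y(1) xy
        by (simp add: rtrancl.rtrancl_into_rtrancl)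
      then show ?thesis using False by blast
    qed
  next
    case False
    then have "pendant_attached x y" using y by blast
    then have "x' = y \<or> pendant_attached x' y" using pendant_attached_step e by blast
    then show ?thesis using y by blast
  qed
qed

lemma pr_connected:
  assumes "connected_graph V E"
  shows "connected_graph FV FE"
proof -
  obtain v where v: "v \<in> V" using assms unfolding connected_graph_def by blast
  have "FV \<noteq> {}"
  proof (cases "v \<in> NR")
    case True
    then obtain r where "pendant_attached v r" using nonroot_pendant_attached by blast
    then show ?thesis using pendant_attached_root pr_V_iff by blast
  next
    case False then show ?thesis using v pr_V_iff by blast
  qed
  moreover have "(u, w) \<in> {(x, y). {x, y} \<in> FE}\<^sup>*" if "u \<in> FV" "w \<in> FV" for u w
  proof -
    have uw: "u \<in> V" "u \<notin> NR" "w \<notin> NR" using that by (auto simp: pr_V_iff)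
    have "(u,w) \<in> {(x,y). {x,y} \<in> E}\<^sup>*" using assms that unfolding connected_graph_def pr_V_iff by blast
    from pr_reachable[OF uw(1,2) this] obtain y where
      "(u,y) \<in> {(x,y). {x,y} \<in> FE}\<^sup>*" "w = y \<or> pendant_attached w y" by blast
    then show ?thesis using uw(3) pendant_attached_nonroot by blast
  qed
  ultimately show ?thesis unfolding connected_graph_def by blast
qed

section \<open>Strong cliques of the line graph\<close>

definition edge_star :: "'a \<Rightarrow> 'a set set" where
  "edge_star v = {e \<in> E. v \<in> e}"

definition hits_maximal_matchings :: "'a set set \<Rightarrow> bool" where
  "hits_maximal_matchings C \<longleftrightarrow> (\<forall>M. maximal_matching E M \<longrightarrow> C \<inter> M \<noteq> {})"

lemma line_clique_star_or_tri:
  assumes "C \<subseteq> E" "C \<noteq> {}" "\<forall>e\<in>C. \<forall>f\<in>C. e \<noteq> f \<longrightarrow> e \<inter> f \<noteq> {}"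
  shows "(\<exists>v. C \<subseteq> edge_star v) \<or> (\<exists>a b c. a \<noteq> b \<and> a \<noteq> c \<and> b \<noteq> c \<and> C = tri a b c)"
proof (rule ccontr)
  assume nc: "\<not> ?thesis"
  have meet: "e \<inter> f \<noteq> {}" if "e \<in> C" "f \<in> C" for e f
    using assms that by (cases "e = f") (auto elim: edgeE)
  obtain e where e: "e \<in> C" using assms(2) by blast
  then obtain a b where ab: "a \<noteq> b" "e = {a,b}" using assms(1) by (blast elim: edgeE)
  \<comment> \<open>Edges avoiding a and b exist since C is in no star; they close up a triangle.\<close>
  obtain f where f: "f \<in> C" "a \<notin> f" using nc assms(1) unfolding edge_star_def by blast
  then have "b \<in> f" using meet[OF e f(1)] ab by auto
  then obtain c where c: "f = {b,c}" "c \<noteq> b" using f assms(1) by (blast elim: edge_other_end)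
  have ca: "c \<noteq> a" using f c by auto
  obtain g where g: "g \<in> C" "b \<notin> g" using nc assms(1) unfolding edge_star_def by blast
  then have "a \<in> g" "c \<in> g" using meet[OF e g(1)] meet[OF f(1) g(1)] ab c by auto
  then have gg: "g = {a,c}" using g assms(1) ca by (blast elim: edge_other_end)
  have "C \<subseteq> tri a b c"
  proof
    fix h assume h: "h \<in> C"
    obtain p q where pq: "p \<noteq> q" "h = {p,q}" using h assms(1) by (blast elim: edgeE)
    have "h \<inter> {a,b} \<noteq> {}" "h \<inter> {b,c} \<noteq> {}" "h \<inter> {a,c} \<noteq> {}"
      using meet[OF h e] meet[OF h f(1)] meet[OF h g(1)] ab c gg by simp_all
    then have "p \<in> {a,b,c}" "q \<in> {a,b,c}" using pq ab(1) ca c(2) by blast+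
    then show "h \<in> tri a b c" using doubleton_in_tri pq by simp
  qed
  moreover have "tri a b c \<subseteq> C" using e f(1) g(1) ab(2) c(1) gg unfolding tri_def by simp
  ultimately have "C = tri a b c" by (rule antisym)
  then show False using nc ab(1) ca c(2) by metis
qed

lemma hits_maximal_matchings_star:
  assumes "C \<subseteq> edge_star v" "C \<noteq> {}" "hits_maximal_matchings C"
  shows "C = edge_star v" "strong_vertex V E v"
proof -
  show "C = edge_star v"
  proof
    show "edge_star v \<subseteq> C"
    proof
      fix e assume e: "e \<in> edge_star v"
      show "e \<in> C"
      proof (rule ccontr)
        assume ne: "e \<notin> C"
        have "matching E {e}" using e unfolding matching_def edge_star_def by auto
        then obtain M where M: "maximal_matching E M" "e \<in> M"
          using maximal_matching_exists by blast
        then obtain f where f: "f \<in> C" "f \<in> M"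
          using assms(3) unfolding hits_maximal_matchings_def by blast
        have "f \<noteq> e" "v \<in> f" "v \<in> e" using f ne assms(1) e unfolding edge_star_def by auto
        then show False using maximal_matchingD(2)[OF M(1) f(2) M(2)] by blast
      qed
    qed
  qed (rule assms(1))
  obtain e where "e \<in> C" using assms(2) by blast
  then have "v \<in> V" using assms(1) edge_subset unfolding edge_star_def by blast
  moreover have "\<forall>M. maximal_matching E M \<longrightarrow> v \<in> \<Union>M"
    using assms(1,3) unfolding edge_star_def hits_maximal_matchings_def by blast
  ultimately show "strong_vertex V E v" unfolding strong_vertex_def by blast
qed

lemma strong_clique_edge_star:
  assumes "strong_vertex V E v"
  shows "strong_clique E (line_edges E) (edge_star v)"
  unfolding strong_clique_line_graph_iff
proof (intro conjI ballI allI impI)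
  show "edge_star v \<subseteq> E" unfolding edge_star_def by auto
  fix e f assume "e \<in> edge_star v" "f \<in> edge_star v" "e \<noteq> f"
  then show "e \<inter> f \<noteq> {}" unfolding edge_star_def by auto
next
  fix M assume M: "maximal_matching E M"
  then obtain e where "e \<in> M" "v \<in> e" using assms unfolding strong_vertex_def by blast
  then show "edge_star v \<inter> M \<noteq> {}"
    using maximal_matchingD(1)[OF M] unfolding edge_star_def by blast
qed

lemma strong_clique_tri:
  assumes "a \<noteq> b" "a \<noteq> c" "b \<noteq> c" "tri a b c \<subseteq> E" "hits_maximal_matchings (tri a b c)"
  shows "strong_clique E (line_edges E) (tri a b c)"
  using assms unfolding strong_clique_line_graph_iff hits_maximal_matchings_def tri_def by auto

lemma localizing_partition_cases:
  assumes "localizing_partition E P" "C \<in> P"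
  shows "(\<exists>v. C = edge_star v \<and> strong_vertex V E v) \<or>
    (\<exists>x y z. x \<noteq> y \<and> x \<noteq> z \<and> y \<noteq> z \<and> C = tri x y z \<and> tri x y z \<subseteq> E \<and>
      hits_maximal_matchings (tri x y z))"
proof -
  have "C \<noteq> {}" using assms unfolding localizing_partition_def partition_on_def by blast
  moreover have h: "C \<subseteq> E" "\<forall>e\<in>C. \<forall>f\<in>C. e \<noteq> f \<longrightarrow> e \<inter> f \<noteq> {}" "hits_maximal_matchings C"
    using assms unfolding localizing_partition_def strong_clique_line_graph_iff
      hits_maximal_matchings_def by blast+
  ultimately consider (star) v where "C \<subseteq> edge_star v"
    | (tri) a b c where "a \<noteq> b" "a \<noteq> c" "b \<noteq> c" "C = tri a b c"
    using line_clique_star_or_tri[OF h(1) _ h(2)] by blast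
  then show ?thesis
  proof cases
    case star
    then show ?thesis using hits_maximal_matchings_star[OF star \<open>C \<noteq> {}\<close> h(3)] by blast
  next
    case tri
    then show ?thesis using h(1,3) by blast
  qed
qed

lemma localizing_part_at_edge:
  assumes P: "localizing_partition E P" and C: "C \<in> P" "{p,q} \<in> C"
    and ns: "\<not> strong_vertex V E p"
  shows "(C = edge_star q \<and> strong_vertex V E q) \<or>
    (\<exists>t. C = tri p q t \<and> {p,t} \<in> E \<and> {q,t} \<in> E \<and> t \<noteq> p \<and> t \<noteq> q \<and>
        hits_maximal_matchings (tri p q t))"
  using localizing_partition_cases[OF P C(1)]
proof (elim disjE exE conjE)
  fix v assume v: "C = edge_star v" "strong_vertex V E v"
  then have "v = q" using C(2) ns unfolding edge_star_def by blast
  then show ?thesis using v by blast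
next
  fix x y z assume h: "x \<noteq> y" "x \<noteq> z" "y \<noteq> z" "C = tri x y z" "tri x y z \<subseteq> E"
    "hits_maximal_matchings (tri x y z)"
  have "p \<noteq> q" using C(2) h(4,5) edge_not_loop by blast
  then obtain t where t: "tri x y z = tri p q t" "t \<noteq> p" "t \<noteq> q"
    using tri_through_edge C(2) h by metis
  have "{p,t} \<in> E" "{q,t} \<in> E" using h(5) t(1) unfolding tri_def by auto
  then show ?thesis using h t by metis
qed

lemma tri_avoided_by_maximal_matching:
  assumes "{a,b} \<in> E" "{a,x} \<in> E" "{b,y} \<in> E" "x \<notin> {a,b,c}" "y \<notin> {a,b,c}" "x \<noteq> y"
  shows "\<not> hits_maximal_matchings (tri a b c)"
proof -
  have "a \<noteq> b" using assms(1) edge_not_loop by blast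
  then have "matching E {{a,x},{b,y}}" using assms unfolding matching_def by auto
  then obtain M where "maximal_matching E M" "{{a,x},{b,y}} \<subseteq> M"
    by (rule maximal_matching_exists)
  then have M: "maximal_matching E M" "{a,x} \<in> M" "{b,y} \<in> M" by auto
  have "tri a b c \<inter> M = {}"
  proof (rule ccontr)
    assume "tri a b c \<inter> M \<noteq> {}"
    then obtain t where t: "t \<in> tri a b c" "t \<in> M" by blast
    have "t \<subseteq> {a,b,c}" using t(1) unfolding tri_def by auto
    then have "t \<noteq> {a,x}" "t \<noteq> {b,y}" using assms(4,5) by auto
    then have "t \<inter> {a,x} = {}" "t \<inter> {b,y} = {}"
      using maximal_matchingD(2)[OF M(1) t(2)] M(2,3) by blast+
    moreover have "a \<in> t \<or> b \<in> t" using t(1) unfolding tri_def by auto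
    ultimately show False by blast
  qed
  then show ?thesis using M(1) unfolding hits_maximal_matchings_def by blast
qed

lemma pendant_triangle_hits_maximal_matchings:
  assumes "pt a b c"
  shows "hits_maximal_matchings (tri a b c)"
  unfolding hits_maximal_matchings_def
proof (intro allI impI)
  fix M assume M: "maximal_matching E M"
  show "tri a b c \<inter> M \<noteq> {}"
  proof
    assume h: "tri a b c \<inter> M = {}"
    note Nab = pendant_triangle_nbhd[OF assms]
    have "a \<notin> \<Union>M"
    proof
      assume "a \<in> \<Union>M"
      then obtain y where "{a,y} \<in> M" "y \<in> N a"
        using maximal_matchingD(1)[OF M] by (blast elim: matching_partner)
      then show False using h Nab unfolding tri_def by auto
    qed
    then have "b \<in> \<Union>M" using maximal_matching_covers_nbhd M pendant_triangleD(5)[OF assms] by blast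
    then obtain y where "{b,y} \<in> M" "y \<in> N b"
      using maximal_matchingD(1)[OF M] by (blast elim: matching_partner)
    then show False using h Nab unfolding tri_def by (auto simp: insert_commute)
  qed
qed

lemma pendant_diamond_hits_maximal_matchings:
  assumes "pd a b c d"
  shows "hits_maximal_matchings (tri a b c)"
  unfolding hits_maximal_matchings_def
proof (intro allI impI)
  fix M assume M: "maximal_matching E M"
  show "tri a b c \<inter> M \<noteq> {}"
  proof
    assume h: "tri a b c \<inter> M = {}"
    note Nabc = pendant_diamond_nbhd[OF assms] and dg = pendant_diamondD[OF assms]
    have sub: "M \<subseteq> E" using maximal_matchingD(1)[OF M] .
    have "a \<notin> \<Union>M"
    proof
      assume "a \<in> \<Union>M"
      then obtain y where "{a,y} \<in> M" "y \<in> N a" using sub by (blast elim: matching_partner)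
      then show False using h Nabc unfolding tri_def by auto
    qed
    then have "b \<in> \<Union>M" "c \<in> \<Union>M" using maximal_matching_covers_nbhd M dg(3,4) by blast+
    then obtain y z where y: "{b,y} \<in> M" "y \<in> N b" and z: "{c,z} \<in> M" "z \<in> N c"
      using sub by (blast elim: matching_partner)
    have "y = d" using y h Nabc unfolding tri_def by (auto simp: insert_commute)
    moreover have "z = d" using z h Nabc unfolding tri_def by (auto simp: insert_commute)
    ultimately have "{d,b} \<in> M" "{d,c} \<in> M" using y z by (auto simp: insert_commute)
    moreover have "matching E M" using M unfolding maximal_matching_def by blast
    ultimately have "b = c" using matching_partner_unique by blast
    then show False using dg(2) by simp
  qed
qed

text \<open>The next two lemmas cover pendant K4s as well as the graph K4 itself.\<close>
lemma K4_tri_hits_maximal_matchings: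
  assumes Nabc: "N a \<subseteq> {b,c,d}" "N b \<subseteq> {a,c,d}" "N c \<subseteq> {a,b,d}"
    and ba: "{b,a} \<in> E" and bc: "{b,c} \<in> E" and ca: "{c,a} \<in> E" and dd: "distinct [a,b,c,d]"
  shows "hits_maximal_matchings (tri a b c)"
  unfolding hits_maximal_matchings_def
proof (intro allI impI)
  fix M assume M: "maximal_matching E M"
  show "tri a b c \<inter> M \<noteq> {}"
  proof
    assume h: "tri a b c \<inter> M = {}"
    have m: "matching E M" using M unfolding maximal_matching_def by blast
    \<comment> \<open>Without triangle edges, each of a, b, c can only be matched to d.\<close>
    have to_d: "{d,x} \<in> M" if x: "x \<in> {a,b,c}" "x \<in> \<Union>M" for x
    proof -
      obtain y where y: "{x,y} \<in> M" "y \<in> N x"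
        using maximal_matchingD(1)[OF M] x(2) by (blast elim: matching_partner)
      moreover have "y \<noteq> x" using y(2) not_in_own_nbhd by blast
      ultimately have "y = d" using h Nabc x(1) unfolding tri_def by (auto simp: insert_commute)
      then show ?thesis using y by (simp add: insert_commute)
    qed
    have one: "x = y" if "x \<in> {a,b,c}" "y \<in> {a,b,c}" "x \<in> \<Union>M" "y \<in> \<Union>M" for x y
      using matching_partner_unique[OF m to_d[OF that(1,3)] to_d[OF that(2,4)]] .
    show False
    proof (cases "b \<in> \<Union>M")
      case True
      then have "c \<notin> \<Union>M" using one[of b c] dd by auto
      then have "a \<in> \<Union>M" using maximal_matching_covers_nbhd[OF M _ ca] by blast
      then show False using one[of a b] True dd by auto
    next
      case False
      then have "a \<in> \<Union>M" "c \<in> \<Union>M" using maximal_matching_covers_nbhd[OF M False] ba bc by blast+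
      then show False using one[of a c] dd by auto
    qed
  qed
qed

lemma K4_apex_strong:
  assumes Nabc: "N a \<subseteq> {b,c,d}" "N b \<subseteq> {a,c,d}" "N c \<subseteq> {a,b,d}"
    and ed: "{d,a} \<in> E" "{d,b} \<in> E" "{d,c} \<in> E" and dd: "distinct [a,b,c,d]"
  shows "strong_vertex V E d"
  unfolding strong_vertex_iff isolating_matching_def
proof (intro conjI notI)
  show "d \<in> V" using ed(1) edge_vertices by blast
  assume "\<exists>M. matching E M \<and> d \<notin> \<Union>M \<and> (\<forall>v. {d,v} \<in> E \<longrightarrow> v \<in> \<Union>M)"
  then obtain M where M: "matching E M" "d \<notin> \<Union>M" "\<forall>v. {d,v} \<in> E \<longrightarrow> v \<in> \<Union>M" by blast
  have sub: "M \<subseteq> E" using M(1) unfolding matching_def by blast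
  \<comment> \<open>a, b and c would all have to be matched among themselves: impossible for three vertices.\<close>
  have partner: "\<exists>y. {x,y} \<in> M \<and> y \<in> {a,b,c} - {x}" if x: "x \<in> {a,b,c}" for x
  proof -
    have "x \<in> \<Union>M" using x ed M(3) by auto
    then obtain y where y: "{x,y} \<in> M" "y \<in> N x" using sub by (blast elim: matching_partner)
    have "y \<noteq> d" using y M(2) by auto
    moreover have "y \<noteq> x" using y(2) not_in_own_nbhd by blast
    ultimately show ?thesis using y Nabc x by auto
  qed
  obtain y where y: "{a,y} \<in> M" "y \<in> {b,c}" using partner[of a] dd by auto
  define w where "w = (if y = b then c else b)"
  have w: "w \<in> {a,b,c}" "w \<noteq> a" "w \<noteq> y" using y dd unfolding w_def by auto
  obtain t where t: "{w,t} \<in> M" "t \<in> {a,b,c} - {w}" using partner[OF w(1)] by blast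
  then have "t = a \<or> t = y" using y dd unfolding w_def by auto
  then show False
  proof
    assume "t = a"
    then show False using matching_partner_unique[OF M(1), of a y w] y(1) t(1) w(3)
      by (simp add: insert_commute)
  next
    assume "t = y"
    then show False using matching_partner_unique[OF M(1), of y a w] y(1) t(1) w(2)
      by (simp add: insert_commute)
  qed
qed

lemma pendant_K4_root_strong:
  assumes "pk a b c d"
  shows "strong_vertex V E d"
  using K4_apex_strong[of a b c d] pendant_K4_nbhd[OF assms] pendant_K4D[OF assms]
  by (simp add: insert_commute)

lemma pendant_K4_hits_maximal_matchings:
  assumes "pk a b c d"
  shows "hits_maximal_matchings (tri a b c)"
  using K4_tri_hits_maximal_matchings[of a b c d] pendant_K4_nbhd[OF assms] pendant_K4D[OF assms]
  by (simp add: insert_commute)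

lemma extra_neighbour:
  assumes "finite A" "card A < card (N d)"
  shows "\<exists>x. {d,x} \<in> E \<and> x \<notin> A"
proof -
  have "\<not> N d \<subseteq> A"
  proof
    assume "N d \<subseteq> A"
    then show False using card_mono[of A "N d"] assms by linarith
  qed
  then show ?thesis using nbhd_iff by blast
qed

lemma pendant_nonroots_not_strong:
  "pt a b c \<Longrightarrow> \<not> strong_vertex V E a \<and> \<not> strong_vertex V E b"
  "pd a b c d \<Longrightarrow> \<not> strong_vertex V E a \<and> \<not> strong_vertex V E b \<and> \<not> strong_vertex V E c"
  "pk a b c d \<Longrightarrow> \<not> strong_vertex V E a \<and> \<not> strong_vertex V E b \<and> \<not> strong_vertex V E c"
proof -
  assume h: "pt a b c"
  note Nab = pendant_triangle_nbhd[OF h] and dg = pendant_triangleD[OF h]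
  have m: "matching E {{b,c}}" "matching E {{a,c}}" using dg unfolding matching_def by auto
  show "\<not> strong_vertex V E a \<and> \<not> strong_vertex V E b"
    using not_strong_vertexI[OF m(1), of a] not_strong_vertexI[OF m(2), of b] Nab dg by auto
next
  assume h: "pd a b c d"
  note Nabc = pendant_diamond_nbhd[OF h] and dg = pendant_diamondD[OF h]
  have "card {b,c} < card (N d)" using dg(1) card_le_2_if_subset[of "{b,c}" b c] by simp
  then obtain x where x: "{d,x} \<in> E" "x \<notin> {b,c}" using extra_neighbour[of "{b,c}" d] by auto
  have "x \<noteq> a" using x dg(8) by (auto simp: insert_commute)
  moreover have "x \<noteq> d" using x(1) edge_not_loop by blast
  ultimately have m: "matching E {{b,c}}" "matching E {{a,c},{d,x}}" "matching E {{a,b},{d,x}}"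
    using dg x unfolding matching_def by auto
  show "\<not> strong_vertex V E a \<and> \<not> strong_vertex V E b \<and> \<not> strong_vertex V E c"
    using not_strong_vertexI[OF m(1), of a] not_strong_vertexI[OF m(2), of b]
      not_strong_vertexI[OF m(3), of c] Nabc dg x by auto
next
  assume h: "pk a b c d"
  note Nabc = pendant_K4_nbhd[OF h] and dg = pendant_K4D[OF h]
  have "card {a,b,c} < card (N d)" using dg(1) card_le_3_if_subset[of "{a,b,c}" a b c] by simp
  then obtain x where x: "{d,x} \<in> E" "x \<notin> {a,b,c}" using extra_neighbour[of "{a,b,c}" d] by auto
  have "x \<noteq> d" using x(1) edge_not_loop by blast
  then have m: "matching E {{b,c},{d,x}}" "matching E {{a,c},{d,x}}" "matching E {{a,b},{d,x}}"
    using dg x unfolding matching_def by auto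
  show "\<not> strong_vertex V E a \<and> \<not> strong_vertex V E b \<and> \<not> strong_vertex V E c"
    using not_strong_vertexI[OF m(1), of a] not_strong_vertexI[OF m(2), of b]
      not_strong_vertexI[OF m(3), of c] Nabc dg x by auto
qed

section \<open>Strong vertices of the pendant reduction\<close>

lemma pendant_triangle_root_unique: "pt a b x \<Longrightarrow> pt a b' x' \<Longrightarrow> x = x'"
  using pendant_triangle_nbhd(1)[of a b x] pendant_triangleD(6)[of a b' x']
    pendant_nonrootsI(1)[of a b x] pendant_triangle_root_notin_nonroots[of a b' x']
  by (auto simp: nbhd_iff)

lemma pendant_diamonds_same_root:
  assumes "pd a b c u" "pd a' b' c' u" "{b,c} \<inter> {b',c'} \<noteq> {}"
  shows "{b,c} = {b',c'}"
proof -
  note N1 = pendant_diamond_nbhd[OF assms(1)] and N2 = pendant_diamond_nbhd[OF assms(2)]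
  have d1: "deg V E a = 2" "deg V E b = 3" "deg V E c = 3" "distinct [a,b,c,u]"
    using assms(1) by (auto simp: pendant_diamond_def)
  have d2: "deg V E a' = 2" "deg V E b' = 3" "deg V E c' = 3" "distinct [a',b',c',u]"
    using assms(2) by (auto simp: pendant_diamond_def)
  have "b = b' \<or> b = c' \<or> c = b' \<or> c = c'" using assms(3) by auto
  then show ?thesis
  proof (elim disjE)
    assume e: "b = b'"
    then have "c' \<in> {a,c,u}" using N1 N2 by auto
    then show ?thesis using e d1 d2 by auto
  next
    assume e: "b = c'"
    then have "b' \<in> {a,c,u}" using N1 N2 by auto
    then show ?thesis using e d1 d2 by auto
  next
    assume e: "c = b'"
    then have "c' \<in> {a,b,u}" using N1 N2 by auto
    then show ?thesis using e d1 d2 by auto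
  next
    assume e: "c = c'"
    then have "b' \<in> {a,b,u}" using N1 N2 by auto
    then show ?thesis using e d1 d2 by auto
  qed
qed

definition tri_tip :: "'a \<Rightarrow> 'a" where
  "tri_tip x = (SOME a. \<exists>b. pt a b x)"

lemma tri_tip:
  assumes "x \<in> R_tri V E"
  shows "\<exists>b. pt (tri_tip x) b x"
proof -
  have "\<exists>a b. pt a b x" using assms unfolding R_tri_def by simp
  then show ?thesis unfolding tri_tip_def by (rule someI_ex)
qed

lemma tri_tip_props:
  assumes "x \<in> R_tri V E"
  shows "tri_tip x \<in> NR" "{x, tri_tip x} \<in> E" "deg V E (tri_tip x) = 2" "x \<notin> NR"
proof -
  obtain b where b: "pt (tri_tip x) b x" using tri_tip[OF assms] by blast
  then show "tri_tip x \<in> NR" "x \<notin> NR"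
    using pendant_nonrootsI(1) pendant_triangle_root_notin_nonroots by blast+
  show "{x, tri_tip x} \<in> E" "deg V E (tri_tip x) = 2"
    using b by (auto simp: pendant_triangle_def insert_commute)
qed

lemma tri_tips_matching:
  assumes "X \<subseteq> R_tri V E"
  shows "matching E ((\<lambda>x. {x, tri_tip x}) ` X)"
  unfolding matching_def
proof (intro conjI ballI impI)
  show "(\<lambda>x. {x, tri_tip x}) ` X \<subseteq> E" using assms tri_tip_props(2) by blast
next
  fix e f assume ef: "e \<in> (\<lambda>x. {x, tri_tip x}) ` X" "f \<in> (\<lambda>x. {x, tri_tip x}) ` X" "e \<noteq> f"
  then obtain x y where xy: "x \<in> X" "y \<in> X" "e = {x, tri_tip x}" "f = {y, tri_tip y}" by blast
  then have "x \<noteq> y" using ef(3) by blast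
  moreover have "tri_tip x \<noteq> tri_tip y"
    using tri_tip[of x] tri_tip[of y] xy(1,2) assms pendant_triangle_root_unique \<open>x \<noteq> y\<close> by force
  moreover have "x \<noteq> tri_tip y" "y \<noteq> tri_tip x"
    using tri_tip_props(1,4) xy(1,2) assms by (metis subsetD)+
  ultimately show "e \<inter> f = {}" using xy by auto
qed

lemma diamond_pairs_matching: "matching E {{b,c} | b c. \<exists>a. pd a b c u}"
  unfolding matching_def
proof (intro conjI ballI impI)
  show "{{b,c} | b c. \<exists>a. pd a b c u} \<subseteq> E" using pendant_diamondD(5) by blast
next
  fix e f assume "e \<in> {{b,c} | b c. \<exists>a. pd a b c u}" "f \<in> {{b,c} | b c. \<exists>a. pd a b c u}" "e \<noteq> f"
  then show "e \<inter> f = {}" using pendant_diamonds_same_root by blast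
qed

text \<open>Sufficiency of condition (c): an isolating matching of u in H restricts to one in F - T,
  T = N_F(u) \<inter> R_tri, because the F-neighbours of u are neither diamond/K4 roots nor adjacent in F.\<close>
lemma strong_vertex_if_reduction_strong:
  assumes u: "u \<in> FV"
    and roots: "\<forall>y\<in>NF u. y \<notin> R_dia V E \<and> y \<notin> R_K4 V E"
    and indep: "\<forall>y\<in>NF u. \<forall>z\<in>NF u. {y,z} \<notin> FE"
    and st: "reduction_strong V E u"
  shows "strong_vertex V E u"
proof (rule ccontr)
  define X where "X = NF u \<inter> R_tri V E"
  assume "\<not> strong_vertex V E u"
  moreover have "u \<in> V" using u pr_V_iff by blast
  ultimately obtain M where "isolating_matching E M u" using strong_vertex_iff by blast
  then have M: "matching E M" "u \<notin> \<Union>M" "\<forall>v. {u,v} \<in> E \<longrightarrow> v \<in> \<Union>M"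
    unfolding isolating_matching_def by blast+
  define M' where "M' = M \<inter> del_E FE X"
  have m': "matching (del_E FE X) M'" using M(1) unfolding matching_def M'_def by blast
  have u': "u \<notin> \<Union>M'" using M(2) unfolding M'_def by blast
  have "v \<in> \<Union>M'" if uv: "{u,v} \<in> del_E FE X" for v
  proof -
    have uvE: "{u,v} \<in> E" and vNR: "v \<notin> NR" and vX: "v \<notin> X"
      using uv unfolding del_pr_E_iff by auto
    have "{u,v} \<in> FE" using uvE vNR u unfolding pr_E_iff pr_V_iff by blast
    then have vNF: "v \<in> NF u" using nbhd_pr_iff by blast
    have "M \<subseteq> E" using M(1) unfolding matching_def by blast
    moreover have "v \<in> \<Union>M" using M(3) uvE by blast
    ultimately obtain z where z: "{v,z} \<in> M" "z \<in> N v" by (rule matching_partner)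
    have zE: "{v,z} \<in> E" using z(2) nbhd_iff by blast
    have zNR: "z \<notin> NR"
    proof
      assume "z \<in> NR"
      then have "pendant_attached z v" using nonroot_nbhd_attached zE vNR by (simp add: insert_commute)
      then show False using pendant_attached_roots vX vNF roots unfolding X_def by blast
    qed
    have "{v,z} \<in> FE" using zE vNR zNR unfolding pr_E_iff by blast
    then have "z \<notin> X" using indep vNF nbhd_pr_iff unfolding X_def by blast
    then have "{v,z} \<in> del_E FE X" using zE vNR zNR vX unfolding del_pr_E_iff by blast
    then show "v \<in> \<Union>M'" using z(1) unfolding M'_def by blast
  qed
  then have "isolating_matching (del_E FE X) M' u"
    using m' u' unfolding isolating_matching_def by blast
  then have "\<not> strong_vertex (del_V FV X) (del_E FE X) u"
    using simple_graph.strong_vertex_iff[OF simple_graph.subgraph_del[OF simple_graph_pr]] by blast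
  then show False using st unfolding reduction_strong_def X_def by blast
qed

text \<open>Necessity of condition (c): an isolating matching of u in F - T extends to one in H by
  matching every root in T with a tip of its pendant triangle and covering each pendant
  diamond at u by its middle edge.\<close>
lemma reduction_strong_if_strong_vertex:
  assumes u: "u \<in> FV" "u \<notin> R_tri V E" "u \<notin> R_K4 V E" and st: "strong_vertex V E u"
  shows "reduction_strong V E u"
  unfolding reduction_strong_def
proof (rule ccontr)
  define X where "X = NF u \<inter> R_tri V E"
  assume "\<not> strong_vertex (del_V FV (NF u \<inter> R_tri V E)) (del_E FE (NF u \<inter> R_tri V E)) u"
  then have "\<not> strong_vertex (del_V FV X) (del_E FE X) u" unfolding X_def .
  moreover have "u \<in> del_V FV X" using u unfolding X_def del_V_def by blast
  ultimately obtain M' where "isolating_matching (del_E FE X) M' u"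
    using simple_graph.strong_vertex_iff[OF simple_graph.subgraph_del[OF simple_graph_pr]] by blast
  then have M': "matching (del_E FE X) M'" "u \<notin> \<Union>M'"
    "\<forall>v. {u,v} \<in> del_E FE X \<longrightarrow> v \<in> \<Union>M'"
    unfolding isolating_matching_def by blast+
  have uV: "u \<in> V" "u \<notin> NR" using u(1) pr_V_iff by blast+
  have XR: "X \<subseteq> R_tri V E" unfolding X_def by blast
  have M'E: "e \<in> E" "e \<inter> NR = {}" "e \<inter> X = {}" if "e \<in> M'" for e
  proof -
    have "e \<in> del_E FE X" using M'(1) that unfolding matching_def by blast
    then show "e \<in> E" "e \<inter> NR = {}" "e \<inter> X = {}" unfolding del_pr_E_iff by blast+
  qed
  define A where "A = (\<lambda>x. {x, tri_tip x}) ` X"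
  define B where "B = {{b,c} | b c. \<exists>a. pd a b c u}"
  have UA: "\<Union>A = X \<union> tri_tip ` X" unfolding A_def by auto
  have UB: "\<Union>B \<subseteq> NR \<inter> {v. deg V E v = 3}"
    unfolding B_def using pendant_nonrootsI(2) by (auto simp: pendant_diamond_def)
  have UM': "\<Union>M' \<inter> (NR \<union> X) = {}" using M'E(2,3) by blast
  have tipsNR: "tri_tip ` X \<subseteq> NR" "X \<inter> NR = {}" using tri_tip_props(1,4) XR by auto
  have "matching E M'" using M'(1) M'E(1) unfolding matching_def by blast
  moreover have "matching E A" unfolding A_def using tri_tips_matching[OF XR] .
  moreover have "\<Union>M' \<inter> \<Union>A = {}" using UA UM' tipsNR by blast
  ultimately have mA: "matching E (M' \<union> A)" by (rule matching_Un)
  have "\<forall>x\<in>X. deg V E (tri_tip x) = 2" using tri_tip_props(3) XR by blast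
  then have "\<Union>A \<inter> \<Union>B = {}" using UA UB tipsNR(2) by fastforce
  then have "\<Union>(M' \<union> A) \<inter> \<Union>B = {}" using UM' UB by blast
  then have m: "matching E (M' \<union> A \<union> B)"
    using matching_Un[OF mA diamond_pairs_matching] unfolding B_def by blast
  have "u \<notin> \<Union>A" using UA tipsNR(1) uV(2) u(2) unfolding X_def by blast
  then have "u \<notin> \<Union>(M' \<union> A \<union> B)" using M'(2) UB uV(2) by blast
  moreover have "v \<in> \<Union>(M' \<union> A \<union> B)" if uv: "{u,v} \<in> E" for v
  proof (cases "v \<in> NR")
    case True
    then have "pendant_attached v u" using nonroot_nbhd_attached uv uV(2) by (simp add: insert_commute)
    then obtain a b c where abc: "pd a b c u" "v \<in> {a,b,c}"
      using u(2,3) unfolding pendant_attached_def R_tri_def R_K4_def by blast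
    then have "v \<noteq> a"
      using uv uV(2) pendant_diamond_nbhd(1)[OF abc(1)] pendant_nonrootsI(2)[OF abc(1)]
      by (auto simp: nbhd_iff insert_commute)
    then show ?thesis using abc unfolding B_def by blast
  next
    case False
    then show ?thesis
      using M'(3) uv uV(2) u(2) unfolding A_def del_pr_E_iff X_def by blast
  qed
  ultimately have "isolating_matching E (M' \<union> A \<union> B) u"
    using m unfolding isolating_matching_def by blast
  then show False using st strong_vertex_iff by blast
qed

section \<open>The exceptional graphs K3, K4 and the diamond\<close>

lemma isomorphic_complete_iff:
  "isomorphic V E (K_V n) (K_E n) \<longleftrightarrow> card V = n \<and> complete_graph V E"
proof
  assume "isomorphic V E (K_V n) (K_E n)"
  then obtain f where f: "bij_betw f V {0..<n}"
    "\<forall>u\<in>V. \<forall>v\<in>V. {u,v} \<in> E \<longleftrightarrow> {f u, f v} \<in> K_E n"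
    unfolding isomorphic_def K_V_def by blast
  have "card V = n" using bij_betw_same_card[OF f(1)] by simp
  moreover have "{u,v} \<in> E" if uv: "u \<in> V" "v \<in> V" "u \<noteq> v" for u v
  proof -
    have "f u \<noteq> f v" using f(1) uv unfolding bij_betw_def inj_on_def by blast
    moreover have "f u < n" "f v < n" using f(1) uv unfolding bij_betw_def by auto
    ultimately show ?thesis using f(2) uv by (simp add: K_E_iff)
  qed
  ultimately show "card V = n \<and> complete_graph V E" unfolding complete_graph_def by blast
next
  assume h: "card V = n \<and> complete_graph V E"
  obtain f where f: "bij_betw f V {0..<n}"
    using finite_same_card_bij[OF finite_V, of "{0..<n}"] h by auto
  have "{u,v} \<in> E \<longleftrightarrow> {f u, f v} \<in> K_E n" if uv: "u \<in> V" "v \<in> V" for u v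
  proof -
    have "f u < n" "f v < n" using f uv unfolding bij_betw_def by auto
    moreover have "f u = f v \<longleftrightarrow> u = v" using f uv unfolding bij_betw_def inj_on_def by blast
    ultimately have "{f u, f v} \<in> K_E n \<longleftrightarrow> u \<noteq> v" by (simp add: K_E_iff)
    moreover have "{u,v} \<in> E \<longleftrightarrow> u \<noteq> v"
      using h uv edge_not_loop unfolding complete_graph_def by blast
    ultimately show ?thesis by simp
  qed
  then show "isomorphic V E (K_V n) (K_E n)" unfolding isomorphic_def K_V_def using f by blast
qed

lemma isomorphic_diamondE:
  assumes "isomorphic V E diamond_V diamond_E"
  obtains a b c d where "distinct [a,b,c,d]" "V = {a,b,c,d}"
    "E = {{a,b},{a,c},{b,c},{b,d},{c,d}}"
proof -
  obtain f where f: "bij_betw f V diamond_V" "\<forall>u\<in>V. \<forall>v\<in>V. {u,v} \<in> E \<longleftrightarrow> {f u, f v} \<in> diamond_E"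
    using assms unfolding isomorphic_def by blast
  define g where "g = inv_into V f"
  have g: "bij_betw g diamond_V V" unfolding g_def using f(1) by (rule bij_betw_inv_into)
  have fg: "f (g i) = i" if "i \<in> diamond_V" for i
    unfolding g_def using f(1) that by (simp add: bij_betw_def f_inv_into_f)
  have gf: "g (f v) = v" if "v \<in> V" for v
    unfolding g_def using f(1) that by (simp add: bij_betw_def inv_into_f_f)
  define a b c d where "a = g 0" "b = g 1" "c = g 2" "d = g 3"
  have dV: "diamond_V = {0,1,2,3}" by (simp add: diamond_V_def)
  have V4: "V = {a,b,c,d}" using g unfolding bij_betw_def a_b_c_d_def dV by simp
  have dist: "distinct [a,b,c,d]" unfolding a_b_c_d_def
    using g unfolding bij_betw_def inj_on_def dV by auto
  have edge: "{u,v} \<in> E \<longleftrightarrow> {f u, f v} \<in> diamond_E" if "u \<in> V" "v \<in> V" for u v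
    using f(2) that by blast
  have "E \<subseteq> {{a,b},{a,c},{b,c},{b,d},{c,d}}"
  proof
    fix e assume e: "e \<in> E"
    then obtain u v where uv: "e = {u,v}" "u \<in> V" "v \<in> V" by (blast elim: edgeE)
    then have "{f u, f v} \<in> diamond_E" using edge e by blast
    then have "{f u, f v} = {0,1} \<or> {f u, f v} = {0,2} \<or> {f u, f v} = {1,2} \<or>
      {f u, f v} = {1,3} \<or> {f u, f v} = {2,3}" unfolding diamond_E_def by simp
    moreover have "e = g ` {f u, f v}" using uv gf by simp
    ultimately show "e \<in> {{a,b},{a,c},{b,c},{b,d},{c,d}}"
      unfolding a_b_c_d_def by (elim disjE) simp_all
  qed
  moreover have "{{a,b},{a,c},{b,c},{b,d},{c,d}} \<subseteq> E"
  proof -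
    have abcd: "a \<in> V" "b \<in> V" "c \<in> V" "d \<in> V" using V4 by auto
    have "f a = 0" "f b = 1" "f c = 2" "f d = 3" unfolding a_b_c_d_def using fg dV by auto
    then show ?thesis using edge[OF abcd(1) abcd(2)] edge[OF abcd(1) abcd(3)]
      edge[OF abcd(2) abcd(3)] edge[OF abcd(2) abcd(4)] edge[OF abcd(3) abcd(4)]
      by (simp add: diamond_E_def)
  qed
  ultimately show ?thesis using that dist V4 by blast
qed

lemma complete_3_localizable:
  assumes "card V = 3" "complete_graph V E"
  shows "localizable E (line_edges E)"
proof -
  obtain a b c where abc: "V = {a,b,c}" "distinct [a,b,c]" using assms(1) by (auto simp: card_3_iff)
  have E: "E = tri a b c"
  proof
    show "E \<subseteq> tri a b c"
    proof
      fix e assume "e \<in> E"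
      then obtain u v where "e = {u,v}" "u \<noteq> v" "u \<in> V" "v \<in> V" by (blast elim: edgeE)
      then show "e \<in> tri a b c" using abc doubleton_in_tri by simp
    qed
    show "tri a b c \<subseteq> E" using assms(2) abc unfolding complete_graph_def tri_def by auto
  qed
  then have "E \<noteq> {}" unfolding tri_def by simp
  have "hits_maximal_matchings (tri a b c)"
    unfolding hits_maximal_matchings_def
  proof (intro allI impI)
    fix M assume M: "maximal_matching E M"
    obtain e where "e \<in> E" using \<open>E \<noteq> {}\<close> by blast
    then have "matching E {e}" unfolding matching_def by simp
    then have "M \<noteq> {}" using M unfolding maximal_matching_def by blast
    then show "tri a b c \<inter> M \<noteq> {}" using E maximal_matchingD(1)[OF M] by blast
  qed
  then have "strong_clique E (line_edges E) E" using strong_clique_tri abc E by simp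
  moreover have "partition_on E {E}" using \<open>E \<noteq> {}\<close> by (rule partition_on_space)
  ultimately show ?thesis unfolding localizable_def by blast
qed

lemma complete_4_localizable:
  assumes "card V = 4" "complete_graph V E"
  shows "localizable E (line_edges E)"
proof -
  obtain a b c d where abcd: "V = {a,b,c,d}" "distinct [a,b,c,d]"
    using assms(1) by (auto simp: card_4_iff)
  have E6: "{a,b} \<in> E" "{a,c} \<in> E" "{b,c} \<in> E" "{d,a} \<in> E" "{d,b} \<in> E" "{d,c} \<in> E"
    using assms(2) abcd unfolding complete_graph_def by auto
  have Nsub: "N x \<subseteq> {a,b,c,d} - {x}" for x
  proof
    fix y assume "y \<in> N x"
    then have "y \<in> V" "x \<noteq> y" using nbhd_iff edge_vertices edge_not_loop by blast+
    then show "y \<in> {a,b,c,d} - {x}" using abcd(1) by blast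
  qed
  have Nabc: "N a \<subseteq> {b,c,d}" "N b \<subseteq> {a,c,d}" "N c \<subseteq> {a,b,d}"
    using Nsub[of a] Nsub[of b] Nsub[of c] abcd(2) by auto
  have tE: "tri a b c \<subseteq> E" using E6 unfolding tri_def by auto
  \<comment> \<open>The line graph of K4 is partitioned by the star at d and the opposite triangle.\<close>
  define P where "P = {tri a b c, edge_star d}"
  have "\<Union>P = E"
  proof
    show "\<Union>P \<subseteq> E" unfolding P_def edge_star_def using tE by auto
    show "E \<subseteq> \<Union>P"
    proof
      fix e assume e: "e \<in> E"
      then obtain u v where uv: "e = {u,v}" "u \<noteq> v" "u \<in> V" "v \<in> V" by (blast elim: edgeE)
      show "e \<in> \<Union>P"
      proof (cases "d \<in> e")
        case True then show ?thesis using e unfolding P_def edge_star_def by blast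
      next
        case False
        then have "u \<in> {a,b,c}" "v \<in> {a,b,c}" using uv abcd by auto
        then have "e \<in> tri a b c" using uv(1,2) doubleton_in_tri by simp
        then show ?thesis unfolding P_def by blast
      qed
    qed
  qed
  moreover have "tri a b c \<inter> edge_star d = {}"
    using abcd(2) unfolding tri_def edge_star_def by auto
  moreover have "{a,b} \<in> tri a b c" "{d,a} \<in> edge_star d"
    using E6 unfolding tri_def edge_star_def by auto
  ultimately have "partition_on E P"
    unfolding P_def by (intro partition_onI) (auto simp: disjnt_def)
  moreover have "strong_vertex V E d" using K4_apex_strong[OF Nabc E6(4-6) abcd(2)] .
  moreover have "hits_maximal_matchings (tri a b c)"
    using K4_tri_hits_maximal_matchings[OF Nabc] E6(1-3) abcd(2) by (simp add: insert_commute)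
  moreover have "a \<noteq> b" "a \<noteq> c" "b \<noteq> c" using abcd(2) by auto
  ultimately show ?thesis
    using strong_clique_tri[of a b c] strong_clique_edge_star[of d] tE
    unfolding localizable_def P_def by blast
qed

lemma diamond_not_localizable:
  assumes "distinct [a,b,c,d]" "V = {a,b,c,d}" "E = {{a,b},{a,c},{b,c},{b,d},{c,d}}"
  shows "\<not> localizable E (line_edges E)"
proof
  assume "localizable E (line_edges E)"
  then obtain P where P: "localizing_partition E P" using localizable_line_graph_iff by blast
  have Na: "N a \<subseteq> {b,c}" and Nd: "N d \<subseteq> {b,c}"
  proof -
    have "{x,y} \<in> E \<Longrightarrow> y \<in> {b,c}" if "x \<in> {a,d}" for x y
      using assms(1,3) that by (auto simp: doubleton_eq_iff)
    then show "N a \<subseteq> {b,c}" "N d \<subseteq> {b,c}" using nbhd_iff by blast+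
  qed
  have m: "matching E {{b,c}}" using assms(3) unfolding matching_def by auto
  have nsa: "\<not> strong_vertex V E a" by (rule not_strong_vertexI[OF m]) (use Na assms(1) in auto)
  have nsd: "\<not> strong_vertex V E d" by (rule not_strong_vertexI[OF m]) (use Nd assms(1) in auto)
  \<comment> \<open>The parts of ab and of dc must both contain bc, hence coincide; no star or triangle
    contains both ab and dc.\<close>
  obtain C1 where C1: "C1 \<in> P" "{a,b} \<in> C1"
    by (rule localizing_partition_cover[OF P, of "{a,b}"]) (simp add: assms(3))
  obtain C2 where C2: "C2 \<in> P" "{d,c} \<in> C2"
    by (rule localizing_partition_cover[OF P, of "{d,c}"]) (simp add: assms(3) insert_commute)
  have c1: "C1 = edge_star b \<or> C1 = tri a b c"
    using localizing_part_at_edge[OF P C1 nsa]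
  proof (elim disjE exE conjE)
    fix t assume "C1 = tri a b t" "{a,t} \<in> E" "t \<noteq> b"
    then show ?thesis using Na nbhd_iff by blast
  qed simp
  have c2: "C2 = edge_star c \<or> C2 = tri d c b"
    using localizing_part_at_edge[OF P C2 nsd]
  proof (elim disjE exE conjE)
    fix t assume "C2 = tri d c t" "{d,t} \<in> E" "t \<noteq> c"
    then show ?thesis using Nd nbhd_iff by blast
  qed simp
  have "{b,c} \<in> C1" using c1 assms(3) unfolding edge_star_def tri_def by auto
  moreover have "{b,c} \<in> C2" using c2 assms(3) unfolding edge_star_def tri_def
    by (auto simp: insert_commute)
  ultimately have "C1 = C2" using localizing_partition_unique[OF P C1(1) C2(1)] by blast
  then have ab: "{a,b} \<in> C2" using C1 by simp
  from c2 show False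
  proof
    assume "C2 = edge_star c"
    then have "c \<in> {a,b}" using ab unfolding edge_star_def by blast
    then show False using assms(1) by auto
  next
    assume "C2 = tri d c b"
    then have "a \<in> {d,c,b}" using ab unfolding tri_def by blast
    then show False using assms(1) by auto
  qed
qed

definition pendant_core :: "'a set set \<Rightarrow> bool" where
  "pendant_core C \<longleftrightarrow>
     (\<exists>a b c. C = tri a b c \<and> (pt a b c \<or> (\<exists>d. pd a b c d) \<or> (\<exists>d. pk a b c d)))"

lemma has_neighbour:
  assumes "connected_graph V E" "E \<noteq> {}" "u \<in> V"
  obtains v where "{u,v} \<in> E"
proof -
  obtain x y where xy: "x \<noteq> y" "x \<in> V" "y \<in> V" using assms(2) by (blast elim: edgeE)
  then obtain w where w: "w \<in> V" "w \<noteq> u" by metis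
  have "(u,w) \<in> {(x,y). {x,y} \<in> E}\<^sup>*" using assms(1,3) w(1) unfolding connected_graph_def by blast
  then show ?thesis using w(2) that by (cases rule: converse_rtranclE) auto
qed

end

section \<open>Sufficiency: localizing partitions from admissible bipartitions\<close>

locale admissible_graph = simple_graph +
  fixes U W :: "'a set"
  assumes admissible: "admissible_bipartition V E U W"
begin

lemma UW: "U \<inter> W = {}" "U \<union> W = FV"
  using admissible unfolding admissible_bipartition_def bipartition_def by auto

lemma U_independent: "u \<in> U \<Longrightarrow> v \<in> U \<Longrightarrow> {u,v} \<notin> FE"
  and W_independent: "u \<in> W \<Longrightarrow> v \<in> W \<Longrightarrow> {u,v} \<notin> FE"
  using admissible unfolding admissible_bipartition_def bipartition_def independent_def by blast+

lemma roots_U: "R_dia V E \<union> R_K4 V E \<subseteq> U"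
  and roots_W: "R_tri V E \<subseteq> W"
  and U_reduction_strong: "u \<in> U - R_K4 V E \<Longrightarrow> reduction_strong V E u"
  using admissible unfolding admissible_bipartition_def by blast+

lemma U_W_nonroots: "u \<in> U \<union> W \<Longrightarrow> u \<in> V \<and> u \<notin> NR"
  using UW(2) pr_V_iff by blast

text \<open>The pendant core through a non-root z: the roots of diamonds and K4s are excluded via U,
  while triangle roots lie in W.\<close>
definition core_at :: "'a \<Rightarrow> 'a set set" where
  "core_at z = {f \<in> E. f \<subseteq> insert z (N z) \<and> f \<inter> U = {}}"

lemma core_at_eq_tri:
  assumes "z \<in> {a,b,c}" "tri a b c \<subseteq> E" "{a,b,c} \<inter> U = {}" "N z \<subseteq> {a,b,c} \<union> U"
  shows "core_at z = tri a b c"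
proof
  show "core_at z \<subseteq> tri a b c"
  proof
    fix f assume "f \<in> core_at z"
    then have fE: "f \<in> E" and fS: "f \<subseteq> insert z (N z)" and fU: "f \<inter> U = {}"
      unfolding core_at_def by blast+
    obtain p q where pq: "p \<noteq> q" "f = {p,q}" using fE by (blast elim: edgeE)
    have "p \<in> {a,b,c}" "q \<in> {a,b,c}" using fS fU assms(1,4) pq by blast+
    then show "f \<in> tri a b c" using doubleton_in_tri pq by simp
  qed
next
  have "{a,b,c} \<subseteq> insert z (N z)"
    using assms(1,2) unfolding tri_def by (auto simp: nbhd_iff insert_commute)
  then show "tri a b c \<subseteq> core_at z"
    using assms(2,3) unfolding core_at_def tri_def by auto
qed

lemma pendant_coreE:
  assumes "pendant_core C"
  obtains a b c where "C = tri a b c" "a \<noteq> b" "a \<noteq> c" "b \<noteq> c" "tri a b c \<subseteq> E"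
    "a \<in> NR" "b \<in> NR" "hits_maximal_matchings (tri a b c)"
    "\<And>z. z \<in> {a,b,c} \<Longrightarrow> z \<in> NR \<Longrightarrow> C = core_at z"
proof -
  obtain a b c where C: "C = tri a b c" and cs: "pt a b c \<or> (\<exists>d. pd a b c d) \<or> (\<exists>d. pk a b c d)"
    using assms unfolding pendant_core_def by blast
  from cs show ?thesis
  proof (elim disjE exE)
    assume h: "pt a b c"
    note Nab = pendant_triangle_nbhd[OF h] and dg = pendant_triangleD[OF h]
    have "c \<in> W" using h roots_W unfolding R_tri_def by blast
    then have c: "c \<notin> U" "c \<notin> NR" using UW(1) U_W_nonroots by blast+
    have ab: "a \<in> NR" "b \<in> NR" using pendant_nonrootsI(1)[OF h] by blast+
    then have "{a,b,c} \<inter> U = {}" using c U_W_nonroots by blast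
    moreover have tE: "tri a b c \<subseteq> E" using dg unfolding tri_def by auto
    ultimately have "C = core_at z" if "z \<in> {a,b,c}" "z \<in> NR" for z
      using core_at_eq_tri[of z a b c] that Nab c C by auto
    then show ?thesis
      using that[OF C dg(2-4) tE ab] pendant_triangle_hits_maximal_matchings[OF h] by blast
  next
    fix d assume h: "pd a b c d"
    note Nabc = pendant_diamond_nbhd[OF h] and dg = pendant_diamondD[OF h]
    have "d \<in> U" using h roots_U unfolding R_dia_def by blast
    have abc: "a \<in> NR" "b \<in> NR" "c \<in> NR" using pendant_nonrootsI(2)[OF h] by blast+
    then have "{a,b,c} \<inter> U = {}" using U_W_nonroots by blast
    moreover have tE: "tri a b c \<subseteq> E" using dg unfolding tri_def by auto
    ultimately have "C = core_at z" if "z \<in> {a,b,c}" for z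
      using core_at_eq_tri[of z a b c] that Nabc \<open>d \<in> U\<close> C by auto
    moreover have "a \<noteq> b" "a \<noteq> c" "b \<noteq> c" using dg(2) by auto
    ultimately show ?thesis
      using that[OF C _ _ _ tE abc(1,2)] pendant_diamond_hits_maximal_matchings[OF h] by blast
  next
    fix d assume h: "pk a b c d"
    note Nabc = pendant_K4_nbhd[OF h] and dg = pendant_K4D[OF h]
    have "d \<in> U" using h roots_U unfolding R_K4_def by blast
    have abc: "a \<in> NR" "b \<in> NR" "c \<in> NR" using pendant_nonrootsI(3)[OF h] by blast+
    then have "{a,b,c} \<inter> U = {}" using U_W_nonroots by blast
    moreover have tE: "tri a b c \<subseteq> E" using dg unfolding tri_def by auto
    ultimately have "C = core_at z" if "z \<in> {a,b,c}" for z
      using core_at_eq_tri[of z a b c] that Nabc \<open>d \<in> U\<close> C by auto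
    moreover have "a \<noteq> b" "a \<noteq> c" "b \<noteq> c" using dg(2) by auto
    ultimately show ?thesis
      using that[OF C _ _ _ tE abc(1,2)] pendant_K4_hits_maximal_matchings[OF h] by blast
  qed
qed

lemma pendant_core_nonroot:
  assumes "pendant_core C" "f \<in> C"
  obtains z where "z \<in> f" "z \<in> NR"
proof -
  obtain a b c where "C = tri a b c" "a \<in> NR" "b \<in> NR" using pendant_coreE[OF assms(1)] by metis
  then show ?thesis using that assms(2) unfolding tri_def by auto
qed

lemma pendant_core_eq_core_at:
  assumes "pendant_core C" "f \<in> C" "z \<in> f" "z \<in> NR"
  shows "C = core_at z"
proof -
  obtain a b c where h: "C = tri a b c" "\<And>z. z \<in> {a,b,c} \<Longrightarrow> z \<in> NR \<Longrightarrow> C = core_at z"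
    using pendant_coreE[OF assms(1)] by metis
  have "f \<subseteq> {a,b,c}" using assms(2) h(1) unfolding tri_def by auto
  then show ?thesis using h(2) assms(3,4) by blast
qed

lemma pendant_core_disjoint_U:
  assumes "pendant_core C" "f \<in> C"
  shows "f \<inter> U = {}"
proof -
  obtain z where "z \<in> f" "z \<in> NR" using pendant_core_nonroot[OF assms] .
  then have "C = core_at z" using pendant_core_eq_core_at assms by blast
  then show ?thesis using assms(2) unfolding core_at_def by blast
qed

lemma pendant_core_core_at:
  assumes "pendant_attached z r"
  shows "pendant_core (core_at z)"
proof -
  have zNR: "z \<in> NR" using pendant_attached_nonroot[OF assms] .
  from assms obtain a b c where C: "pendant_core (tri a b c)" "z \<in> {a,b,c}"
    unfolding pendant_attached_def pendant_core_def by blast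
  then have "\<exists>f\<in>tri a b c. z \<in> f" unfolding tri_def by auto
  then have "tri a b c = core_at z" using pendant_core_eq_core_at[OF C(1)] zNR by blast
  then show ?thesis using C(1) by simp
qed

lemma U_strong_vertex:
  assumes u: "u \<in> U"
  shows "strong_vertex V E u"
proof (cases "u \<in> R_K4 V E")
  case True
  then show ?thesis using pendant_K4_root_strong unfolding R_K4_def by blast
next
  case False
  have uF: "u \<in> FV" using u UW(2) by blast
  have NW: "y \<in> W" if "y \<in> NF u" for y
  proof -
    have "{u,y} \<in> FE" "y \<in> FV" using that nbhd_pr_iff unfolding nbhd_def by blast+
    then show ?thesis using U_independent[OF u] UW(2) by blast
  qed
  have "\<forall>y\<in>NF u. y \<notin> R_dia V E \<and> y \<notin> R_K4 V E" using NW roots_U UW(1) by blast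
  moreover have "\<forall>y\<in>NF u. \<forall>z\<in>NF u. {y,z} \<notin> FE" using NW W_independent by blast
  ultimately show ?thesis
    using strong_vertex_if_reduction_strong[OF uF] U_reduction_strong u False by blast
qed

definition admissible_partition :: "'a set set set" where
  "admissible_partition = edge_star ` U \<union> Collect pendant_core"

lemma admissible_partition_cover: "\<Union>admissible_partition = E"
proof
  have "C \<subseteq> E" if "pendant_core C" for C using pendant_coreE[OF that] by metis
  then show "\<Union>admissible_partition \<subseteq> E"
    unfolding admissible_partition_def edge_star_def by blast
  show "E \<subseteq> \<Union>admissible_partition"
  proof
    fix e assume e: "e \<in> E"
    show "e \<in> \<Union>admissible_partition"
    proof (cases "e \<inter> U = {}")
      case False
      then obtain u where "u \<in> e" "u \<in> U" by blast
      then show ?thesis using e unfolding edge_star_def admissible_partition_def by blast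
    next
      case True
      obtain p q where pq: "e = {p,q}" "p \<in> V" "q \<in> V" using e by (blast elim: edgeE)
      \<comment> \<open>Otherwise e would be an edge of F inside W.\<close>
      have "p \<in> NR \<or> q \<in> NR"
      proof (rule ccontr)
        assume "\<not> ?thesis"
        then have "{p,q} \<in> FE" "p \<in> W" "q \<in> W"
          using e pq True UW(2) pr_E_iff pr_V_iff by auto
        then show False using W_independent by blast
      qed
      then obtain z where z: "z \<in> e" "z \<in> NR" using pq by blast
      then obtain r where "pendant_attached z r" using nonroot_pendant_attached by blast
      then have "pendant_core (core_at z)" by (rule pendant_core_core_at)
      moreover obtain y where "e = {z,y}" using e z(1) by (blast elim: edge_other_end)
      then have "e \<in> core_at z" using e True unfolding core_at_def by (auto simp: nbhd_iff)
      ultimately show ?thesis unfolding admissible_partition_def by blast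
    qed
  qed
qed

lemma admissible_partition_disjoint: "disjoint admissible_partition"
proof (rule disjointI)
  fix p q assume pq: "p \<in> admissible_partition" "q \<in> admissible_partition" "p \<noteq> q"
  show "p \<inter> q = {}"
  proof (rule ccontr)
    assume "p \<inter> q \<noteq> {}"
    then obtain f where f: "f \<in> p" "f \<in> q" by blast
    consider (stars) u v where "u \<in> U" "v \<in> U" "p = edge_star u" "q = edge_star v"
      | (star_core) u where "u \<in> U" "p = edge_star u \<or> q = edge_star u" "pendant_core p \<or> pendant_core q"
      | (cores) "pendant_core p" "pendant_core q"
      using pq(1,2) unfolding admissible_partition_def by blast
    then show False
    proof cases
      case stars
      then have "f \<in> E" "u \<in> f" "v \<in> f" "u \<noteq> v" using f pq(3) unfolding edge_star_def by auto
      then have "f = {u,v}" by (blast elim: edge_other_end)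
      then have "{u,v} \<in> FE" using \<open>f \<in> E\<close> stars(1,2) U_W_nonroots pr_E_iff by auto
      then show False using U_independent stars(1,2) by blast
    next
      case star_core
      then show False using pendant_core_disjoint_U f unfolding edge_star_def by blast
    next
      case cores
      obtain z where z: "z \<in> f" "z \<in> NR" using pendant_core_nonroot[OF cores(1) f(1)] .
      then have "p = core_at z" "q = core_at z" using pendant_core_eq_core_at cores f by blast+
      then show False using pq(3) by simp
    qed
  qed
qed

lemma localizable_if_admissible:
  assumes "connected_graph V E" "E \<noteq> {}"
  shows "localizable E (line_edges E)"
proof -
  have "{} \<notin> admissible_partition"
  proof
    assume "{} \<in> admissible_partition"
    then consider (star) u where "u \<in> U" "{} = edge_star u" | (core) "pendant_core {}"
      unfolding admissible_partition_def by blast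
    then show False
    proof cases
      case star
      then obtain v where "{u,v} \<in> E" using has_neighbour[OF assms] U_W_nonroots by blast
      then show False using star unfolding edge_star_def by blast
    next
      case core
      then show False by (rule pendant_coreE) (simp add: tri_def)
    qed
  qed
  then have "partition_on E admissible_partition"
    using admissible_partition_cover admissible_partition_disjoint unfolding partition_on_def by blast
  moreover have "strong_clique E (line_edges E) C" if "C \<in> admissible_partition" for C
    using that unfolding admissible_partition_def
  proof (elim UnE imageE CollectE)
    fix u assume "C = edge_star u" "u \<in> U"
    then show ?thesis using strong_clique_edge_star U_strong_vertex by blast
  next
    assume "pendant_core C"
    then show ?thesis by (rule pendant_coreE) (use strong_clique_tri in blast)
  qed
  ultimately show ?thesis unfolding localizable_def by blast
qed

end

context simple_graph
begin

lemma connected_closed_eq_V: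
  assumes "connected_graph V E" "S \<subseteq> V" "u \<in> S" "\<forall>v\<in>S. N v \<subseteq> S"
  shows "V = S"
proof
  show "V \<subseteq> S"
  proof
    fix v assume "v \<in> V"
    then have "(u,v) \<in> {(x,y). {x,y} \<in> E}\<^sup>*" using assms(1-3) unfolding connected_graph_def by blast
    then show "v \<in> S"
    proof (induction rule: rtrancl_induct)
      case base then show ?case using assms(3) .
    next
      case (step y z)
      then show ?case using assms(4) nbhd_iff by blast
    qed
  qed
qed (rule assms(2))

lemma edges_eqI:
  assumes "V \<subseteq> S" "\<forall>p\<in>S. \<forall>q\<in>N p. {p,q} \<in> D" "D \<subseteq> E"
  shows "E = D"
proof
  show "E \<subseteq> D"
  proof
    fix e assume "e \<in> E"
    then obtain p q where "e = {p,q}" "p \<in> V" "{p,q} \<in> E" by (blast elim: edgeE)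
    then show "e \<in> D" using assms(1,2) nbhd_iff by blast
  qed
qed (rule assms(3))

lemma hits_tri_outer_neighbours_eq:
  assumes "hits_maximal_matchings (tri a b c)" "{a,b} \<in> E"
    "a' \<in> N a - {a,b,c}" "b' \<in> N b - {a,b,c}"
  shows "a' = b'"
  using tri_avoided_by_maximal_matching[OF assms(2), of a' b' c] assms nbhd_iff by blast

end

section \<open>Necessity\<close>

locale localizable_graph = simple_graph +
  fixes P :: "'a set set set"
  assumes connected: "connected_graph V E"
    and P: "localizing_partition E P"
    and not_K3: "\<not> (card V = 3 \<and> complete_graph V E)"
    and not_K4: "\<not> (card V = 4 \<and> complete_graph V E)"
begin

lemma tri_two_deg_2_nonroot:
  assumes "distinct [x,y,w]" "N x = {y,w}" "N y = {x,w}"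
  shows "x \<in> NR"
proof -
  have E: "{x,y} \<in> E" "{x,w} \<in> E" "{y,w} \<in> E" using assms(2,3) nbhd_iff by blast+
  have "{x,y} \<subseteq> N w" using E nbhd_iff by (auto simp: insert_commute)
  show ?thesis
  proof (cases "2 < card (N w)")
    case True
    then have "pt x y w" using E assms edge_vertices unfolding pendant_triangle_def deg_eq_card by auto
    then show ?thesis using pendant_nonrootsI(1) by blast
  next
    case False
    moreover have "2 \<le> card (N w)"
      using card_mono[OF finite_nbhd \<open>{x,y} \<subseteq> N w\<close>] assms(1) by simp
    ultimately have Nw: "N w = {x,y}"
      using eq_doubleton_if_card_2[OF finite_nbhd \<open>{x,y} \<subseteq> N w\<close>] assms(1) by simp
    have "V = {x,y,w}"
      by (rule connected_closed_eq_V[OF connected]) (use E edge_vertices assms Nw in auto)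
    moreover have "complete_graph {x,y,w} E" using E unfolding complete_graph_def by (auto simp: insert_commute)
    ultimately show ?thesis using not_K3 assms(1) by simp
  qed
qed

lemma tri_diamond_nonroot:
  assumes "distinct [p,x,w,s]" "N p = {x,w}" "N x = {p,w,s}" "N w = {p,x,s}"
  shows "x \<in> NR"
proof -
  have E: "{p,x} \<in> E" "{p,w} \<in> E" "{x,w} \<in> E" "{x,s} \<in> E" "{w,s} \<in> E"
    using assms(2-4) nbhd_iff by blast+
  have ps: "{p,s} \<notin> E" using assms(1,2) nbhd_iff[of s p] by auto
  have "{x,w} \<subseteq> N s" using E nbhd_iff by (auto simp: insert_commute)
  show ?thesis
  proof (cases "3 \<le> card (N s)")
    case True
    then have "pd p x w s"
      using E ps assms edge_vertices unfolding pendant_diamond_def deg_eq_card by auto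
    then show ?thesis using pendant_nonrootsI(2) by blast
  next
    case False
    have "N s \<subseteq> {x,w}"
    proof
      fix r assume r: "r \<in> N s"
      show "r \<in> {x,w}"
      proof (rule ccontr)
        assume "r \<notin> {x,w}"
        then have "3 \<le> card (N s)"
          using card_ge_3_if_subset[OF finite_nbhd, of x w r] \<open>{x,w} \<subseteq> N s\<close> r assms(1) by auto
        then show False using False by simp
      qed
    qed
    then have Ns: "N s = {x,w}" using \<open>{x,w} \<subseteq> N s\<close> by blast
    \<comment> \<open>Then H is the diamond, which is not localizable.\<close>
    have V: "V = {p,x,w,s}"
      by (rule connected_closed_eq_V[OF connected]) (use E edge_vertices assms Ns in auto)
    have "E = {{p,x},{p,w},{x,w},{x,s},{w,s}}"
      by (rule edges_eqI[of "{p,x,w,s}"]) (use V assms Ns E in \<open>auto simp: insert_commute\<close>)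
    then show ?thesis using diamond_not_localizable[OF assms(1) V] P localizable_line_graph_iff by blast
  qed
qed

lemma tri_K4_nonroot:
  assumes "distinct [x,y,w,s]" "N x = {y,w,s}" "N y = {x,w,s}" "N w = {x,y,s}"
  shows "x \<in> NR"
proof -
  have E: "{x,y} \<in> E" "{x,w} \<in> E" "{x,s} \<in> E" "{y,w} \<in> E" "{y,s} \<in> E" "{w,s} \<in> E"
    using assms(2-4) nbhd_iff by blast+
  have "{x,y,w} \<subseteq> N s" using E nbhd_iff by (auto simp: insert_commute)
  show ?thesis
  proof (cases "3 < card (N s)")
    case True
    then have "pk x y w s" using E assms edge_vertices unfolding pendant_K4_def deg_eq_card by auto
    then show ?thesis using pendant_nonrootsI(3) by blast
  next
    case False
    have "N s \<subseteq> {x,y,w}"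
    proof
      fix r assume r: "r \<in> N s"
      show "r \<in> {x,y,w}"
      proof (rule ccontr)
        assume "r \<notin> {x,y,w}"
        then have "4 \<le> card (N s)"
          using card_ge_4_if_subset[OF finite_nbhd, of x y w r] \<open>{x,y,w} \<subseteq> N s\<close> r assms(1)
          by auto
        then show False using False by simp
      qed
    qed
    then have Ns: "N s = {x,y,w}" using \<open>{x,y,w} \<subseteq> N s\<close> by blast
    have "V = {x,y,w,s}"
      by (rule connected_closed_eq_V[OF connected]) (use E edge_vertices assms Ns in auto)
    moreover have "complete_graph {x,y,w,s} E"
      using E unfolding complete_graph_def by (auto simp: insert_commute)
    ultimately show ?thesis using not_K4 assms(1) by simp
  qed
qed

text \<open>A triangle hit by every maximal matching has at most one common outer neighbour, and
  the resulting local configurations are pendant subgraphs or one of the excluded graphs.\<close>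
lemma hits_tri_nonroot:
  assumes d: "distinct [x,y,w]" and tE: "tri x y w \<subseteq> E" and hits: "hits_maximal_matchings (tri x y w)"
  shows "x \<in> NR \<or> y \<in> NR"
proof -
  define Ox Oy Ow where "Ox = N x - {x,y,w}" "Oy = N y - {x,y,w}" "Ow = N w - {x,y,w}"
  have E: "{x,y} \<in> E" "{x,w} \<in> E" "{y,w} \<in> E" using tE unfolding tri_def by auto
  have Txy: "p = q" if "p \<in> Ox" "q \<in> Oy" for p q
    using hits_tri_outer_neighbours_eq[OF hits E(1)] that unfolding Ox_Oy_Ow_def by blast
  have Txw: "p = q" if "p \<in> Ox" "q \<in> Ow" for p q
    using hits_tri_outer_neighbours_eq[of x w y, OF _ E(2)] hits that tri_commute(2)
    unfolding Ox_Oy_Ow_def by (metis insert_commute)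
  have Tyw: "p = q" if "p \<in> Oy" "q \<in> Ow" for p q
    using hits_tri_outer_neighbours_eq[of y w x, OF _ E(3)] hits that tri_commute
    unfolding Ox_Oy_Ow_def by (metis insert_commute)
  have singletons: "A = {s} \<and> B = {s}" if "s \<in> A" "t \<in> B" "\<And>p q. p \<in> A \<Longrightarrow> q \<in> B \<Longrightarrow> p = q"
    for A B :: "'a set" and s t
    using that by blast
  have Nx: "N x = {y,w} \<union> Ox" and Ny: "N y = {x,w} \<union> Oy" and Nw: "N w = {x,y} \<union> Ow"
    using E not_in_own_nbhd unfolding Ox_Oy_Ow_def by (auto simp: nbhd_iff insert_commute)
  have dO: "s \<notin> {x,y,w}" if "s \<in> Ox \<union> Oy \<union> Ow" for s using that unfolding Ox_Oy_Ow_def by blast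
  show ?thesis
  proof (cases "Ox = {}"; cases "Oy = {}")
    assume "Ox = {}" "Oy = {}"
    then show ?thesis using tri_two_deg_2_nonroot[OF d] Nx Ny by simp
  next
    assume "Ox = {}" "Oy \<noteq> {}"
    show ?thesis
    proof (cases "Ow = {}")
      case True
      then show ?thesis using tri_two_deg_2_nonroot[of x w y] d Nx Nw \<open>Ox = {}\<close>
        by (auto simp: insert_commute)
    next
      case False
      then obtain s where "Oy = {s}" "Ow = {s}" using singletons Tyw \<open>Oy \<noteq> {}\<close> by (metis ex_in_conv)
      then show ?thesis using tri_diamond_nonroot[of x y w s] d dO Nx Ny Nw \<open>Ox = {}\<close>
        by (auto simp: insert_commute)
    qed
  next
    assume "Ox \<noteq> {}" "Oy = {}"
    show ?thesis
    proof (cases "Ow = {}")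
      case True
      then show ?thesis using tri_two_deg_2_nonroot[of y w x] d Ny Nw \<open>Oy = {}\<close>
        by (auto simp: insert_commute)
    next
      case False
      then obtain s where "Ox = {s}" "Ow = {s}" using singletons Txw \<open>Ox \<noteq> {}\<close> by (metis ex_in_conv)
      then show ?thesis using tri_diamond_nonroot[of y x w s] d dO Nx Ny Nw \<open>Oy = {}\<close>
        by (auto simp: insert_commute)
    qed
  next
    assume "Ox \<noteq> {}" "Oy \<noteq> {}"
    then obtain s where s: "Ox = {s}" "Oy = {s}" using singletons Txy by (metis ex_in_conv)
    show ?thesis
    proof (cases "Ow = {}")
      case True
      then show ?thesis using tri_diamond_nonroot[of w x y s] d dO Nx Ny Nw s
        by (auto simp: insert_commute)
    next
      case False
      then have "Ow = {s}" using Txw s by blast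
      then show ?thesis using tri_K4_nonroot[of x y w s] d dO Nx Ny Nw s
        by (auto simp: insert_commute)
    qed
  qed
qed

lemma strong_vertex_if_star_part:
  assumes "u \<in> V" "edge_star u \<in> P"
  shows "strong_vertex V E u"
  using localizing_partition_cases[OF P assms(2)]
proof (elim disjE exE conjE)
  fix v assume v: "edge_star u = edge_star v" "strong_vertex V E v"
  show ?thesis unfolding strong_vertex_def
  proof (intro conjI allI impI)
    fix M assume M: "maximal_matching E M"
    then obtain e where "e \<in> M" "v \<in> e" using v(2) unfolding strong_vertex_def by blast
    moreover have "e \<in> edge_star v" using calculation maximal_matchingD(1)[OF M]
      unfolding edge_star_def by blast
    ultimately show "u \<in> \<Union>M" using v(1) unfolding edge_star_def by blast
  qed (rule assms(1))
next
  fix x y z assume h: "x \<noteq> y" "x \<noteq> z" "y \<noteq> z" "edge_star u = tri x y z"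
  then have "{x,y} \<in> edge_star u" "{x,z} \<in> edge_star u" "{y,z} \<in> edge_star u"
    unfolding tri_def by auto
  then have "u \<in> {x,y}" "u \<in> {x,z}" "u \<in> {y,z}" unfolding edge_star_def by blast+
  then show ?thesis using h(1-3) by auto
qed

lemma edge_star_eq_nbhd:
  assumes "edge_star w = edge_star d" "w \<noteq> d"
  shows "N d \<subseteq> {w}"
proof
  fix y assume "y \<in> N d"
  then have "{d,y} \<in> edge_star w" using assms(1) by (simp add: nbhd_iff edge_star_def)
  then have "w \<in> {d,y}" unfolding edge_star_def by simp
  then show "y \<in> {w}" using assms(2) by blast
qed

lemma pendant_triangle_part:
  assumes "pt a b c"
  shows "tri a b c \<in> P"
proof -
  note Nab = pendant_triangle_nbhd[OF assms] and dg = pendant_triangleD[OF assms]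
  obtain C where C: "C \<in> P" "{a,b} \<in> C" by (rule localizing_partition_cover[OF P dg(5)])
  have nsa: "\<not> strong_vertex V E a" and nsb: "\<not> strong_vertex V E b"
    using pendant_nonroots_not_strong(1)[OF assms] by blast+
  have "C = tri a b c"
    using localizing_part_at_edge[OF P C nsa]
  proof (elim disjE exE conjE)
    fix t assume "C = tri a b t" "{a,t} \<in> E" "t \<noteq> b"
    moreover have "t \<in> N a" using \<open>{a,t} \<in> E\<close> nbhd_iff by blast
    ultimately show ?thesis using Nab by auto
  qed (use nsb in simp)
  then show ?thesis using C(1) by simp
qed

lemma pendant_triangle_root_star_not_part:
  assumes "pt a b c"
  shows "edge_star c \<notin> P"
proof
  assume "edge_star c \<in> P"
  moreover have "{a,c} \<in> tri a b c" "{a,c} \<in> edge_star c"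
    using pendant_triangleD(6)[OF assms] unfolding tri_def edge_star_def by auto
  ultimately have "edge_star c = tri a b c"
    using localizing_partition_unique[OF P _ pendant_triangle_part[OF assms]] by blast
  then have "{a,b} \<in> edge_star c" unfolding tri_def by simp
  then have "c \<in> {a,b}" unfolding edge_star_def by simp
  then show False using pendant_triangleD(3,4)[OF assms] by auto
qed

lemma pendant_diamond_root_star_part:
  assumes "pd a b c d"
  shows "edge_star d \<in> P"
proof -
  note Nabc = pendant_diamond_nbhd[OF assms] and dg = pendant_diamondD[OF assms]
  have nsa: "\<not> strong_vertex V E a" and nsb: "\<not> strong_vertex V E b"
    using pendant_nonroots_not_strong(2)[OF assms] by blast+
  obtain C1 where C1: "C1 \<in> P" "{a,b} \<in> C1" by (rule localizing_partition_cover[OF P dg(3)])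
  have "C1 = tri a b c"
    using localizing_part_at_edge[OF P C1 nsa]
  proof (elim disjE exE conjE)
    fix t assume "C1 = tri a b t" "{a,t} \<in> E" "t \<noteq> b"
    moreover have "t \<in> N a" using \<open>{a,t} \<in> E\<close> nbhd_iff by blast
    ultimately show ?thesis using Nabc by auto
  qed (use nsb in simp)
  \<comment> \<open>The part of bd can be neither the triangle abd (no edge ad) nor bcd (bc is already in C1).\<close>
  obtain C2 where C2: "C2 \<in> P" "{b,d} \<in> C2" by (rule localizing_partition_cover[OF P dg(6)])
  show ?thesis
    using localizing_part_at_edge[OF P C2 nsb]
  proof (elim disjE exE conjE)
    assume "C2 = edge_star d" then show ?thesis using C2 by simp
  next
    fix t assume t: "C2 = tri b d t" "{b,t} \<in> E" "{d,t} \<in> E" "t \<noteq> b" "t \<noteq> d"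
    then have "t = a \<or> t = c" using Nabc nbhd_iff by auto
    then show ?thesis
    proof
      assume "t = a" then show ?thesis using t(3) dg(8) by (simp add: insert_commute)
    next
      assume "t = c"
      then have "{b,c} \<in> C2" using t(1) unfolding tri_def by (simp add: insert_commute)
      moreover have "{b,c} \<in> C1" using \<open>C1 = tri a b c\<close> unfolding tri_def by simp
      ultimately have "C1 = C2" using localizing_partition_unique[OF P C1(1) C2(1)] by blast
      then have "a \<in> {b,d,c}" using C1(2) t(1) \<open>t = c\<close> unfolding tri_def by blast
      then show ?thesis using dg(2) by auto
    qed
  qed
qed

lemma pendant_K4_root_star_part:
  assumes "pk a b c d"
  shows "edge_star d \<in> P"
proof -
  note Nabc = pendant_K4_nbhd[OF assms] and dg = pendant_K4D[OF assms]
  have nsa: "\<not> strong_vertex V E a" using pendant_nonroots_not_strong(3)[OF assms] by blast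
  have "card {a,b,c} < card (N d)" using dg(1) card_le_3_if_subset[of "{a,b,c}" a b c] by simp
  then obtain x where x: "{d,x} \<in> E" "x \<notin> {a,b,c}" using extra_neighbour[of "{a,b,c}" d] by auto
  have "x \<noteq> d" using x(1) edge_not_loop by blast
  \<comment> \<open>Neither triangle adb nor adc is hit by every maximal matching, thanks to dx.\<close>
  have "\<not> hits_maximal_matchings (tri a d b)"
    by (rule tri_avoided_by_maximal_matching[OF dg(8) dg(4) x(1)]) (use x dg(2) \<open>x \<noteq> d\<close> in auto)
  moreover have "\<not> hits_maximal_matchings (tri a d c)"
    by (rule tri_avoided_by_maximal_matching[OF dg(8) dg(3) x(1)]) (use x dg(2) \<open>x \<noteq> d\<close> in auto)
  moreover obtain C where C: "C \<in> P" "{a,d} \<in> C" by (rule localizing_partition_cover[OF P dg(8)])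
  ultimately show ?thesis
    using localizing_part_at_edge[OF P C nsa]
  proof (elim disjE exE conjE)
    fix t assume t: "{a,t} \<in> E" "t \<noteq> d" "hits_maximal_matchings (tri a d t)"
      and nb: "\<not> hits_maximal_matchings (tri a d b)" "\<not> hits_maximal_matchings (tri a d c)"
    have "t \<in> N a" using t(1) nbhd_iff by blast
    then have "t = b \<or> t = c" using Nabc t(2) by auto
    then show ?thesis using t(3) nb by (elim disjE) simp_all
  qed (use C(1) in simp)
qed

text \<open>Distinct vertices can share a star only in a single-edge graph, so the star parts
  determine their centres up to this choice.\<close>
definition star_centre :: "'a set set \<Rightarrow> 'a" where
  "star_centre C = (SOME v. v \<in> FV \<and> edge_star v = C)"

definition star_centres :: "'a set" where
  "star_centres = {star_centre C | C. C \<in> P \<and> (\<exists>v\<in>FV. C = edge_star v)}"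

lemma star_centre:
  assumes "v \<in> FV"
  shows "star_centre (edge_star v) \<in> FV" "edge_star (star_centre (edge_star v)) = edge_star v"
  using someI[of "\<lambda>w. w \<in> FV \<and> edge_star w = edge_star v" v] assms
  unfolding star_centre_def by blast+

lemma star_centresD:
  assumes "u \<in> star_centres"
  shows "u \<in> FV" "edge_star u \<in> P"
  using assms star_centre unfolding star_centres_def by auto

lemma star_centresI:
  assumes "v \<in> FV" "edge_star v \<in> P"
  shows "star_centre (edge_star v) \<in> star_centres"
  using assms unfolding star_centres_def by blast

lemma star_centres_inj:
  assumes "u \<in> star_centres" "v \<in> star_centres" "edge_star u = edge_star v"
  shows "u = v"
proof -
  obtain u' v' where "u' \<in> FV" "v' \<in> FV" "u = star_centre (edge_star u')" "v = star_centre (edge_star v')"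
    using assms(1,2) unfolding star_centres_def by blast
  then show ?thesis using assms(3) star_centre(2) by metis
qed

lemma star_centres_independent:
  assumes "u \<in> star_centres" "v \<in> star_centres"
  shows "{u,v} \<notin> FE"
proof
  assume "{u,v} \<in> FE"
  then have e: "{u,v} \<in> E" using pr_E_iff by blast
  then have "{u,v} \<in> edge_star u" "{u,v} \<in> edge_star v" unfolding edge_star_def by auto
  then have "edge_star u = edge_star v"
    using localizing_partition_unique[OF P star_centresD(2)[OF assms(1)] star_centresD(2)[OF assms(2)]]
    by blast
  then show False using star_centres_inj[OF assms] e edge_not_loop by blast
qed

lemma non_centres_independent:
  assumes uv: "u \<in> FV - star_centres" "v \<in> FV - star_centres"
  shows "{u,v} \<notin> FE"
proof
  assume "{u,v} \<in> FE"
  then have e: "{u,v} \<in> E" "u \<notin> NR" "v \<notin> NR" using pr_E_iff by auto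
  have "u \<noteq> v" using e(1) edge_not_loop by blast
  obtain C where C: "C \<in> P" "{u,v} \<in> C" by (rule localizing_partition_cover[OF P e(1)])
  from localizing_partition_cases[OF P C(1)] show False
  proof (elim disjE exE conjE)
    fix t assume t: "C = edge_star t"
    then have "t \<in> {u,v}" using C(2) unfolding edge_star_def by blast
    then have tF: "t \<in> FV" using uv by blast
    let ?c = "star_centre (edge_star t)"
    have "?c \<in> star_centres" using star_centresI[OF tF] t C(1) by simp
    moreover have "{u,v} \<in> edge_star ?c" using C(2) t star_centre(2)[OF tF] by simp
    ultimately show False using uv unfolding edge_star_def by blast
  next
    fix x y z assume h: "x \<noteq> y" "x \<noteq> z" "y \<noteq> z" "C = tri x y z" "tri x y z \<subseteq> E"
      "hits_maximal_matchings (tri x y z)"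
    obtain t where t: "tri x y z = tri u v t" "t \<noteq> u" "t \<noteq> v"
      using tri_through_edge[of u v x y z] C(2) h \<open>u \<noteq> v\<close> by blast
    have "u \<in> NR \<or> v \<in> NR"
      by (rule hits_tri_nonroot[of u v t]) (use h t \<open>u \<noteq> v\<close> in auto)
    then show False using e by blast
  qed
qed

lemma pendant_roots_star_centres:
  "R_dia V E \<union> R_K4 V E \<subseteq> star_centres" "R_tri V E \<inter> star_centres = {}"
proof
  fix d assume "d \<in> R_dia V E \<union> R_K4 V E"
  then have "edge_star d \<in> P \<and> d \<in> FV \<and> 3 \<le> card (N d)"
    unfolding R_dia_def R_K4_def
    using pendant_diamond_root_star_part pendant_K4_root_star_part
      pendant_diamond_root_notin_nonroots pendant_K4_root_notin_nonroots
      pendant_diamondD(1,9) pendant_K4D(1,9) pr_V_iff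
    by fastforce
  then have dF: "d \<in> FV" and sP: "edge_star d \<in> P" and d3: "3 \<le> card (N d)" by blast+
  \<comment> \<open>The centre of the star at d is d itself, as d has degree at least 3.\<close>
  have "star_centre (edge_star d) = d"
  proof (rule ccontr)
    assume "star_centre (edge_star d) \<noteq> d"
    then have "N d \<subseteq> {star_centre (edge_star d)}" using edge_star_eq_nbhd star_centre(2)[OF dF] by blast
    then have "card (N d) \<le> 1" using card_mono[of "{star_centre (edge_star d)}" "N d"] by simp
    then show False using d3 by simp
  qed
  then show "d \<in> star_centres" using star_centresI[OF dF sP] by simp
next
  show "R_tri V E \<inter> star_centres = {}"
    using pendant_triangle_root_star_not_part star_centresD(2) unfolding R_tri_def by blast
qed

lemma admissible_star_centres: "admissible_bipartition V E star_centres (FV - star_centres)"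
  unfolding admissible_bipartition_def bipartition_def independent_def
proof (intro conjI ballI)
  show "star_centres \<inter> (FV - star_centres) = {}" "star_centres \<union> (FV - star_centres) = FV"
    "star_centres \<subseteq> FV" "FV - star_centres \<subseteq> FV" using star_centresD(1) by blast+
  show "R_dia V E \<union> R_K4 V E \<subseteq> star_centres" by (rule pendant_roots_star_centres(1))
  have "R_tri V E \<subseteq> FV"
    unfolding R_tri_def using pendant_triangleD(10) pendant_triangle_root_notin_nonroots pr_V_iff
    by blast
  then show "R_tri V E \<subseteq> FV - star_centres" using pendant_roots_star_centres(2) by blast
next
  fix u v assume "u \<in> star_centres" "v \<in> star_centres"
  then show "{u,v} \<notin> FE" by (rule star_centres_independent)
next
  fix u v assume "u \<in> FV - star_centres" "v \<in> FV - star_centres"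
  then show "{u,v} \<notin> FE" by (rule non_centres_independent)
next
  fix u assume u: "u \<in> star_centres - R_K4 V E"
  then have "u \<in> FV" "u \<notin> R_tri V E" "u \<notin> R_K4 V E"
    using star_centresD(1) pendant_roots_star_centres(2) by blast+
  moreover have "strong_vertex V E u"
    using strong_vertex_if_star_part star_centresD u pr_V_iff by blast
  ultimately show "reduction_strong V E u" by (rule reduction_strong_if_strong_vertex)
qed

end

context simple_graph
begin

lemma localizable_iff_admissible:
  assumes conn: "connected_graph V E"
    and not_K3: "\<not> (card V = 3 \<and> complete_graph V E)"
    and not_K4: "\<not> (card V = 4 \<and> complete_graph V E)"
  shows "localizable E (line_edges E) \<longleftrightarrow>
    \<not> isomorphic V E diamond_V diamond_E \<and> connected_graph FV FE \<and>
    (\<exists>U W. admissible_bipartition V E U W)"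
proof
  assume loc: "localizable E (line_edges E)"
  then obtain P where P: "localizing_partition E P" using localizable_line_graph_iff by blast
  interpret localizable_graph V E P by unfold_locales (use conn P not_K3 not_K4 in auto)
  have "\<not> isomorphic V E diamond_V diamond_E"
    using loc diamond_not_localizable by (metis isomorphic_diamondE)
  then show "\<not> isomorphic V E diamond_V diamond_E \<and> connected_graph FV FE \<and>
    (\<exists>U W. admissible_bipartition V E U W)"
    using pr_connected[OF conn] admissible_star_centres by blast
next
  assume "\<not> isomorphic V E diamond_V diamond_E \<and> connected_graph FV FE \<and>
    (\<exists>U W. admissible_bipartition V E U W)"
  then obtain U W where "admissible_bipartition V E U W" by blast
  then interpret admissible_graph V E U W by unfold_locales
  show "localizable E (line_edges E)"
  proof (cases "E = {}")
    case True
    then show ?thesis unfolding localizable_def by (simp add: partition_on_empty)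
  next
    case False
    then show ?thesis using localizable_if_admissible[OF conn] by blast
  qed
qed

end

theorem mainTheorem17:
  fixes V :: "'a set" and E :: "'a set set"
  assumes "graph V E" and "connected_graph V E"
  shows "localizable E (line_edges E) \<longleftrightarrow>
    ((\<not> isomorphic V E (K_V 3) (K_E 3) \<and> \<not> isomorphic V E (K_V 4) (K_E 4) \<and>
      \<not> isomorphic V E diamond_V diamond_E \<and>
      connected_graph (pr_V V E) (pr_E V E) \<and>
      (\<exists>U W. bipartition (pr_V V E) (pr_E V E) U W \<and>
         R_dia V E \<union> R_K4 V E \<subseteq> U \<and>
         R_tri V E \<subseteq> W \<and>
         (\<forall>u \<in> U - R_K4 V E.
            strong_vertex
              (del_V (pr_V V E) (nbhd (pr_V V E) (pr_E V E) u \<inter> R_tri V E))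
              (del_E (pr_E V E) (nbhd (pr_V V E) (pr_E V E) u \<inter> R_tri V E)) u)))
     \<or> isomorphic V E (K_V 3) (K_E 3) \<or> isomorphic V E (K_V 4) (K_E 4))"
proof -
  interpret simple_graph V E by (rule simple_graph.intro) (rule assms(1))
  note complete_iff = isomorphic_complete_iff[of 3] isomorphic_complete_iff[of 4]
  show ?thesis
  proof (cases "isomorphic V E (K_V 3) (K_E 3) \<or> isomorphic V E (K_V 4) (K_E 4)")
    case True
    then show ?thesis using complete_iff complete_3_localizable complete_4_localizable by blast
  next
    case False
    then show ?thesis
      using localizable_iff_admissible[OF assms(2)] complete_iff
      unfolding admissible_bipartition_def reduction_strong_def by blast
  qed
qed

end
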